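(* Let $N_F\ge1$, $N=2^{N_F}$, and let $i\mapsto|i|\in\{0,1\}$ be a parity function on $\{1,\dots,N\}$ with exactly $N/2$ even and $N/2$ odd indices. Let $$\tilde{\mathcal M}=\Big\{b=(b_1,\dots,b_N)\in\mathbb C^N:\ \sum_i|b_i|^2=1,\ (b_i)_{|i|=0}\neq0,\ (b_i)_{|i|=1}\neq0\Big\}$$ with the subspace topology, and let $\mathcal M=\tilde{\mathcal M}/\!\sim$ with the quotient topology, where $b\sim b'$ iff there exist $e^{i\beta}\in\mathrm U(1)$ and $\eta\in\{\pm1\}$ with $b'_i=e^{i\beta}\eta^{|i|}b_i$ for all $i$. Then $\pi_1(\mathcal M)\cong\mathbb Z$ if $N_F=1$, and $\pi_1(\mathcal M)\cong\mathbb Z/2\mathbb Z$ if $N_F\ge2$.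
   Context: $\mathcal M$ is the space of gauge-equivalence classes of injective fMPSs in canonical form with bond dimension $2$ ($n=1$) and Wall invariant $(-)$ for a system with $N_F$ fermion flavors, written in the gauge $A^i=\sigma_x^{|i|}\otimes b_i$; by the fundamental theorem the residual gauge freedom is exactly $b_i\mapsto e^{i\beta}\eta^{|i|}b_i$. The non-vanishing conditions on the even and odd components are the injectivity conditions. *)

theory Defs
  imports "HOL-Analysis.Analysis" "HOL-Algebra.Elementary_Groups"
begin

definition eq_classes :: "'a topology \<Rightarrow> ('a \<Rightarrow> 'a \<Rightarrow> bool) \<Rightarrow> 'a set set" where
  "eq_classes X R = {{y \<in> topspace X. R x y} | x. x \<in> topspace X}"

definition quotient_topology :: "'a topology \<Rightarrow> ('a \<Rightarrow> 'a \<Rightarrow> bool) \<Rightarrow> 'a set topology" where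
  "quotient_topology X R = topology (\<lambda>U. U \<subseteq> eq_classes X R \<and> openin X (\<Union>U))"

text \<open>Homotopy of paths relative to the endpoints (only the values on [0,1] matter).\<close>

definition path_homotopic :: "'a topology \<Rightarrow> (real \<Rightarrow> 'a) \<Rightarrow> (real \<Rightarrow> 'a) \<Rightarrow> bool" where
  "path_homotopic X p q \<longleftrightarrow>
     (\<exists>h. continuous_map (prod_topology (top_of_set {0..1::real}) (top_of_set {0..1::real})) X h \<and>
          (\<forall>s\<in>{0..1}. h (0, s) = p s \<and> h (1, s) = q s) \<and>
          (\<forall>t\<in>{0..1}. h (t, 0) = p 0 \<and> h (t, 1) = p 1))"

definition loops_at :: "'a topology \<Rightarrow> 'a \<Rightarrow> (real \<Rightarrow> 'a) set" where
  "loops_at X x0 = {g. pathin X g \<and> g 0 = x0 \<and> g 1 = x0}"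

definition loop_class :: "'a topology \<Rightarrow> 'a \<Rightarrow> (real \<Rightarrow> 'a) \<Rightarrow> (real \<Rightarrow> 'a) set" where
  "loop_class X x0 g = {g' \<in> loops_at X x0. path_homotopic X g g'}"

definition path_join :: "(real \<Rightarrow> 'a) \<Rightarrow> (real \<Rightarrow> 'a) \<Rightarrow> real \<Rightarrow> 'a" where
  "path_join p q = (\<lambda>x. if x \<le> 1/2 then p (2 * x) else q (2 * x - 1))"

definition fundamental_group :: "'a topology \<Rightarrow> 'a \<Rightarrow> (real \<Rightarrow> 'a) set monoid" where
  "fundamental_group X x0 =
     \<lparr>carrier = loop_class X x0 ` loops_at X x0,
      monoid.mult = (\<lambda>A B. loop_class X x0 (path_join (SOME a. a \<in> A) (SOME b. b \<in> B))),
      one = loop_class X x0 (\<lambda>_. x0)\<rparr>"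

text \<open>par i = True means |i| = 1 (odd), False means |i| = 0 (even).\<close>

definition Mtilde :: "('n::finite \<Rightarrow> bool) \<Rightarrow> (complex^'n) set" where
  "Mtilde par = {b. (\<Sum>i\<in>UNIV. (cmod (b $ i))\<^sup>2) = 1 \<and>
                    (\<exists>i. \<not> par i \<and> b $ i \<noteq> 0) \<and> (\<exists>i. par i \<and> b $ i \<noteq> 0)}"

definition gauge_equiv :: "('n::finite \<Rightarrow> bool) \<Rightarrow> complex^'n \<Rightarrow> complex^'n \<Rightarrow> bool" where
  "gauge_equiv par b b' \<longleftrightarrow>
     (\<exists>\<beta>::real. \<exists>\<eta>\<in>{1, -1::complex}.
        \<forall>i. b' $ i = exp (\<i> * of_real \<beta>) * (if par i then \<eta> else 1) * b $ i)"

definition Mspace :: "('n::finite \<Rightarrow> bool) \<Rightarrow> (complex^'n) set topology" where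
  "Mspace par = quotient_topology (top_of_set (Mtilde par)) (gauge_equiv par)"

end

theory Submission
  imports Defs "HOL-Complex_Analysis.Riemann_Mapping"
begin

text \<open>The gauge class of \<open>b\<close> is recorded by an explicit continuous map \<open>f\<close> on \<open>M\<^sup>~\<close> whose
  fibres are exactly the gauge orbits and which has continuous local sections; then \<open>M\<close> is
  homeomorphic to the image of \<open>f\<close>, a subset of a Euclidean space, where fundamental groups
  can be computed by complete loop invariants.

  For \<open>N\<^sub>F = 1\<close> there is one even and one odd index and \<open>f b = (b\<^sub>o\<^sub>d\<^sub>d / b\<^sub>e\<^sub>v\<^sub>e\<^sub>n)\<^sup>2\<close> identifies
  \<open>M\<close> with \<open>\<complex> - {0}\<close>, whose loops are classified by their winding number.

  For \<open>N\<^sub>F \<ge> 2\<close>, \<open>f\<close> is \<open>b \<mapsto> b b\<^sup>*\<close> (dividing out the phase) followed by a map that forgets the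
  sign of the parity-mixing entries of \<open>b b\<^sup>*\<close> (dividing out \<open>\<eta>\<close>). The second map is a
  two-sheeted covering whose deck involution flips that sign. Its total space is simply
  connected: \<open>M\<^sup>~\<close> is a retract of a product of two punctured complex spaces of dimension at
  least 2, and a loop of projectors lifts to a path in \<open>M\<^sup>~\<close> that closes up after undoing a
  phase. Hence loops are classified by whether their lift ends on the starting sheet,
  giving \<open>\<int>/2\<close>.\<close>

section \<open>Fundamental groups from complete loop invariants\<close>

lemma fundamental_group_iso_by_invariant:
  fixes \<kappa> :: "(real \<Rightarrow> 'a) \<Rightarrow> 'b" and G :: "('b,'c) monoid_scheme"
  assumes into: "\<And>g. g \<in> loops_at X x0 \<Longrightarrow> \<kappa> g \<in> carrier G"
    and complete: "\<And>g g'. g \<in> loops_at X x0 \<Longrightarrow> g' \<in> loops_at X x0 \<Longrightarrow>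
                      \<kappa> g = \<kappa> g' \<longleftrightarrow> path_homotopic X g g'"
    and onto: "carrier G \<subseteq> \<kappa> ` loops_at X x0"
    and join: "\<And>g g'. g \<in> loops_at X x0 \<Longrightarrow> g' \<in> loops_at X x0 \<Longrightarrow>
                 path_join g g' \<in> loops_at X x0 \<and> \<kappa> (path_join g g') = \<kappa> g \<otimes>\<^bsub>G\<^esub> \<kappa> g'"
  shows "fundamental_group X x0 \<cong> G"
proof -
  let ?L = "loops_at X x0" and ?\<pi> = "fundamental_group X x0"
  define \<Phi> where "\<Phi> A = \<kappa> (SOME a. a \<in> A)" for A :: "(real \<Rightarrow> 'a) set"
  have class_eq: "loop_class X x0 g = {g' \<in> ?L. \<kappa> g' = \<kappa> g}" if g: "g \<in> ?L" for g
  proof -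
    have "path_homotopic X g g' \<longleftrightarrow> \<kappa> g' = \<kappa> g" if "g' \<in> ?L" for g'
      using complete[OF g that] by metis
    thus ?thesis unfolding loop_class_def by blast
  qed
  have rep: "(SOME a. a \<in> loop_class X x0 g) \<in> ?L \<and> \<kappa> (SOME a. a \<in> loop_class X x0 g) = \<kappa> g"
    if "g \<in> ?L" for g
  proof -
    have "g \<in> loop_class X x0 g" using class_eq[OF that] that by auto
    hence "(SOME a. a \<in> loop_class X x0 g) \<in> loop_class X x0 g" by (rule someI[where P="\<lambda>a. a \<in> loop_class X x0 g"])
    thus ?thesis using class_eq[OF that] by auto
  qed
  have \<Phi>: "\<Phi> (loop_class X x0 g) = \<kappa> g" if "g \<in> ?L" for g
    using rep[OF that] by (simp add: \<Phi>_def)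
  have carrier: "carrier ?\<pi> = loop_class X x0 ` ?L"
    by (simp add: fundamental_group_def)
  have hom: "\<Phi> (A \<otimes>\<^bsub>?\<pi>\<^esub> B) = \<Phi> A \<otimes>\<^bsub>G\<^esub> \<Phi> B" if A: "A \<in> carrier ?\<pi>" and B: "B \<in> carrier ?\<pi>" for A B
  proof -
    obtain g g' where g: "g \<in> ?L" "A = loop_class X x0 g" and g': "g' \<in> ?L" "B = loop_class X x0 g'"
      using A B carrier by auto
    define a b where "a = (SOME a. a \<in> A)" and "b = (SOME b. b \<in> B)"
    have a: "a \<in> ?L" "\<kappa> a = \<kappa> g" and b: "b \<in> ?L" "\<kappa> b = \<kappa> g'"
      using rep[OF g(1)] rep[OF g'(1)] g(2) g'(2) a_def b_def by auto
    have "\<Phi> (A \<otimes>\<^bsub>?\<pi>\<^esub> B) = \<Phi> (loop_class X x0 (path_join a b))"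
      by (simp add: fundamental_group_def a_def b_def)
    also have "\<dots> = \<kappa> a \<otimes>\<^bsub>G\<^esub> \<kappa> b" using \<Phi> join[OF a(1) b(1)] by simp
    also have "\<dots> = \<Phi> A \<otimes>\<^bsub>G\<^esub> \<Phi> B" using a b \<Phi> g g' by simp
    finally show ?thesis .
  qed
  have "\<Phi> \<in> hom ?\<pi> G"
    by (rule homI) (use carrier \<Phi> into hom in auto)
  moreover have "inj_on \<Phi> (carrier ?\<pi>)"
    by (rule inj_onI) (use carrier \<Phi> class_eq in auto)
  moreover have "\<Phi> ` carrier ?\<pi> = carrier G"
  proof
    show "\<Phi> ` carrier ?\<pi> \<subseteq> carrier G" using carrier \<Phi> into by auto
    show "carrier G \<subseteq> \<Phi> ` carrier ?\<pi>"
    proof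
      fix y assume "y \<in> carrier G"
      then obtain g where "g \<in> ?L" "y = \<kappa> g" using onto by auto
      thus "y \<in> \<Phi> ` carrier ?\<pi>" using carrier \<Phi> by (metis image_eqI)
    qed
  qed
  ultimately show ?thesis
    by (intro is_isoI isoI) (auto simp: bij_betw_def)
qed

lemma path_homotopic_continuous_map:
  assumes "continuous_map X Y \<phi>" "path_homotopic X g g'"
  shows "path_homotopic Y (\<phi> \<circ> g) (\<phi> \<circ> g')"
proof -
  obtain h where h: "continuous_map (prod_topology (top_of_set {0..1::real}) (top_of_set {0..1::real})) X h"
    "\<forall>s\<in>{0..1}. h (0, s) = g s \<and> h (1, s) = g' s" "\<forall>t\<in>{0..1}. h (t, 0) = g 0 \<and> h (t, 1) = g 1"
    using assms(2) unfolding path_homotopic_def by blast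
  show ?thesis unfolding path_homotopic_def
    by (rule exI[where x="\<phi> \<circ> h"]) (use h continuous_map_compose[OF h(1) assms(1)] in auto)
qed

lemma path_homotopic_eq:
  assumes "pathin X g" "\<And>s. s \<in> {0..1} \<Longrightarrow> g s = g' s"
  shows "path_homotopic X g g'"
proof -
  have "continuous_map (prod_topology (top_of_set {0..1::real}) (top_of_set {0..1::real})) X (g \<circ> snd)"
    using assms(1) unfolding pathin_def by (intro continuous_map_compose[OF continuous_map_snd]) auto
  thus ?thesis unfolding path_homotopic_def
    by (intro exI[where x="g \<circ> snd"]) (use assms(2) in auto)
qed

lemma path_homotopic_compose_iff:
  assumes \<phi>: "continuous_map X Y \<phi>" and \<psi>: "continuous_map Y X \<psi>"
    and \<psi>\<phi>: "\<And>x. x \<in> topspace X \<Longrightarrow> \<psi> (\<phi> x) = x"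
    and g: "pathin X g" and g': "pathin X g'"
  shows "path_homotopic X g g' \<longleftrightarrow> path_homotopic Y (\<phi> \<circ> g) (\<phi> \<circ> g')"
proof
  assume "path_homotopic X g g'"
  thus "path_homotopic Y (\<phi> \<circ> g) (\<phi> \<circ> g')" by (rule path_homotopic_continuous_map[OF \<phi>])
next
  assume "path_homotopic Y (\<phi> \<circ> g) (\<phi> \<circ> g')"
  hence "path_homotopic X (\<psi> \<circ> (\<phi> \<circ> g)) (\<psi> \<circ> (\<phi> \<circ> g'))"
    by (rule path_homotopic_continuous_map[OF \<psi>])
  moreover have "g s \<in> topspace X" "g' s \<in> topspace X" if "s \<in> {0..1}" for s
    using funcset_mem[OF path_image_subset_topspace[OF g] that]
      funcset_mem[OF path_image_subset_topspace[OF g'] that] by auto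
  hence "s \<in> {0..1} \<Longrightarrow> (\<psi> \<circ> (\<phi> \<circ> g)) s = g s \<and> (\<psi> \<circ> (\<phi> \<circ> g')) s = g' s" for s
    using \<psi>\<phi> by simp
  ultimately show "path_homotopic X g g'"
    unfolding path_homotopic_def by (metis atLeastAtMost_iff order_refl zero_le_one)
qed

definition loops_in :: "'a::topological_space set \<Rightarrow> 'a \<Rightarrow> (real \<Rightarrow> 'a) set" where
  "loops_in S a = {g. path g \<and> path_image g \<subseteq> S \<and> pathstart g = a \<and> pathfinish g = a}"

lemma loops_at_top_of_set: "loops_at (top_of_set S) a = loops_in S a"
  by (auto simp: loops_at_def loops_in_def pathin_canon_iff path_image_def pathstart_def pathfinish_def)

lemma path_homotopic_top_of_set: "path_homotopic (top_of_set S) g g' \<longleftrightarrow> homotopic_paths S g g'"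
  unfolding path_homotopic_def homotopic_paths prod_topology_subtopology_eu continuous_map_subtopology_eu
  by (auto simp: pathstart_def pathfinish_def image_subset_iff Pi_iff)

lemma joinpaths_in_loops_in: "g \<in> loops_in S a \<Longrightarrow> g' \<in> loops_in S a \<Longrightarrow> g +++ g' \<in> loops_in S a"
  by (auto simp: loops_in_def path_image_join)

definition complete_loop_invariant ::
    "'a::real_normed_vector set \<Rightarrow> 'a \<Rightarrow> ((real \<Rightarrow> 'a) \<Rightarrow> 'b) \<Rightarrow> ('b,'c) monoid_scheme \<Rightarrow> bool" where
  "complete_loop_invariant S a \<kappa> G \<longleftrightarrow>
     (\<forall>g\<in>loops_in S a. \<kappa> g \<in> carrier G) \<and>
     (\<forall>g\<in>loops_in S a. \<forall>g'\<in>loops_in S a. \<kappa> g = \<kappa> g' \<longleftrightarrow> homotopic_paths S g g') \<and>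
     carrier G \<subseteq> \<kappa> ` loops_in S a \<and>
     (\<forall>g\<in>loops_in S a. \<forall>g'\<in>loops_in S a. \<kappa> (g +++ g') = \<kappa> g \<otimes>\<^bsub>G\<^esub> \<kappa> g')"

lemma complete_loop_invariantI:
  assumes "\<And>g. g \<in> loops_in S a \<Longrightarrow> \<kappa> g \<in> carrier G"
    and "\<And>g g'. g \<in> loops_in S a \<Longrightarrow> g' \<in> loops_in S a \<Longrightarrow> \<kappa> g = \<kappa> g' \<longleftrightarrow> homotopic_paths S g g'"
    and "carrier G \<subseteq> \<kappa> ` loops_in S a"
    and "\<And>g g'. g \<in> loops_in S a \<Longrightarrow> g' \<in> loops_in S a \<Longrightarrow> \<kappa> (g +++ g') = \<kappa> g \<otimes>\<^bsub>G\<^esub> \<kappa> g'"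
  shows "complete_loop_invariant S a \<kappa> G"
  using assms unfolding complete_loop_invariant_def by blast

lemma complete_loop_invariantD:
  assumes "complete_loop_invariant S a \<kappa> G"
  shows "g \<in> loops_in S a \<Longrightarrow> \<kappa> g \<in> carrier G"
    and "g \<in> loops_in S a \<Longrightarrow> g' \<in> loops_in S a \<Longrightarrow> \<kappa> g = \<kappa> g' \<longleftrightarrow> homotopic_paths S g g'"
    and "carrier G \<subseteq> \<kappa> ` loops_in S a"
    and "g \<in> loops_in S a \<Longrightarrow> g' \<in> loops_in S a \<Longrightarrow> \<kappa> (g +++ g') = \<kappa> g \<otimes>\<^bsub>G\<^esub> \<kappa> g'"
  using assms unfolding complete_loop_invariant_def by blast+

lemma fundamental_group_iso_by_homeomorphism:
  fixes \<phi> :: "'a \<Rightarrow> 'b::real_normed_vector" and G :: "('c,'d) monoid_scheme"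
  assumes \<phi>: "continuous_map X (top_of_set S) \<phi>" and \<psi>: "continuous_map (top_of_set S) X \<psi>"
    and \<psi>\<phi>: "\<And>x. x \<in> topspace X \<Longrightarrow> \<psi> (\<phi> x) = x"
    and \<phi>\<psi>: "\<And>y. y \<in> S \<Longrightarrow> \<phi> (\<psi> y) = y"
    and x0: "x0 \<in> topspace X"
    and \<kappa>: "complete_loop_invariant S (\<phi> x0) \<kappa> G"
  shows "fundamental_group X x0 \<cong> G"
proof -
  let ?Y = "top_of_set S" and ?L = "loops_in S (\<phi> x0)"
  have L: "\<phi> \<circ> g \<in> ?L" if "g \<in> loops_at X x0" for g
  proof -
    have "pathin X g" "g 0 = x0" "g 1 = x0" using that unfolding loops_at_def by auto
    moreover have "pathin ?Y (\<phi> \<circ> g)"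
      using \<open>pathin X g\<close> unfolding pathin_def by (rule continuous_map_compose[OF _ \<phi>])
    ultimately show ?thesis unfolding loops_at_top_of_set[symmetric] loops_at_def by auto
  qed
  have in_X: "g s \<in> topspace X" if "g \<in> loops_at X x0" "s \<in> {0..1}" for g s
    using that path_image_subset_topspace unfolding loops_at_def by blast
  have homotopic: "path_homotopic X g g' \<longleftrightarrow> homotopic_paths S (\<phi> \<circ> g) (\<phi> \<circ> g')"
    if "g \<in> loops_at X x0" "g' \<in> loops_at X x0" for g g'
  proof -
    have "pathin X g" "pathin X g'" using that unfolding loops_at_def by auto
    thus ?thesis by (simp add: path_homotopic_compose_iff[OF \<phi> \<psi> \<psi>\<phi>] path_homotopic_top_of_set)
  qed
  show ?thesis
  proof (rule fundamental_group_iso_by_invariant[where \<kappa>="\<lambda>g. \<kappa> (\<phi> \<circ> g)"])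
    show "\<And>g. g \<in> loops_at X x0 \<Longrightarrow> \<kappa> (\<phi> \<circ> g) \<in> carrier G"
      using L complete_loop_invariantD(1)[OF \<kappa>] by blast
    show "\<kappa> (\<phi> \<circ> g) = \<kappa> (\<phi> \<circ> g') \<longleftrightarrow> path_homotopic X g g'"
      if "g \<in> loops_at X x0" "g' \<in> loops_at X x0" for g g'
      using complete_loop_invariantD(2)[OF \<kappa> L L] homotopic that by simp
    show "carrier G \<subseteq> (\<lambda>g. \<kappa> (\<phi> \<circ> g)) ` loops_at X x0"
    proof
      fix y assume "y \<in> carrier G"
      then obtain g where g: "g \<in> ?L" "y = \<kappa> g"
        using complete_loop_invariantD(3)[OF \<kappa>] by blast
      have pg: "pathin ?Y g" using g unfolding loops_at_top_of_set[symmetric] loops_at_def by auto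
      have "pathin X (\<psi> \<circ> g)"
        using pg unfolding pathin_def by (rule continuous_map_compose[OF _ \<psi>])
      hence \<psi>g: "\<psi> \<circ> g \<in> loops_at X x0"
        using g \<psi>\<phi>[OF x0] unfolding loops_at_top_of_set[symmetric] loops_at_def by auto
      have "path_homotopic ?Y g (\<phi> \<circ> (\<psi> \<circ> g))"
      proof (rule path_homotopic_eq[OF pg])
        fix s :: real assume "s \<in> {0..1}"
        hence "g s \<in> S" using funcset_mem[OF path_image_subset_topspace[OF pg]] by simp
        thus "g s = (\<phi> \<circ> (\<psi> \<circ> g)) s" using \<phi>\<psi> by simp
      qed
      hence "\<kappa> g = \<kappa> (\<phi> \<circ> (\<psi> \<circ> g))"
        using complete_loop_invariantD(2)[OF \<kappa> g(1) L[OF \<psi>g]] by (simp add: path_homotopic_top_of_set)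
      thus "y \<in> (\<lambda>g. \<kappa> (\<phi> \<circ> g)) ` loops_at X x0" using \<psi>g g(2) by (metis image_eqI)
    qed
    fix g g' assume g: "g \<in> loops_at X x0" and g': "g' \<in> loops_at X x0"
    have compose_join: "\<phi> \<circ> path_join g g' = (\<phi> \<circ> g) +++ (\<phi> \<circ> g')"
      by (auto simp: path_join_def joinpaths_def)
    have "pathin ?Y (\<phi> \<circ> path_join g g')"
      using joinpaths_in_loops_in[OF L[OF g] L[OF g']]
      unfolding compose_join loops_at_top_of_set[symmetric] loops_at_def by blast
    hence "pathin X (\<psi> \<circ> (\<phi> \<circ> path_join g g'))"
      unfolding pathin_def by (rule continuous_map_compose[OF _ \<psi>])
    hence "pathin X (path_join g g')"
      unfolding pathin_def
      by (rule continuous_map_eq) (use in_X[OF g] in_X[OF g'] \<psi>\<phi> in \<open>auto simp: path_join_def\<close>)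
    moreover have "path_join g g' 0 = x0" "path_join g g' 1 = x0"
      using g g' by (auto simp: path_join_def loops_at_def)
    ultimately show "path_join g g' \<in> loops_at X x0 \<and> \<kappa> (\<phi> \<circ> path_join g g') = \<kappa> (\<phi> \<circ> g) \<otimes>\<^bsub>G\<^esub> \<kappa> (\<phi> \<circ> g')"
      using complete_loop_invariantD(4)[OF \<kappa> L[OF g] L[OF g']] compose_join
      unfolding loops_at_def by simp
  qed
qed


section \<open>Quotients by maps with local sections\<close>

definition local_sections :: "'a::topological_space set \<Rightarrow> ('a \<Rightarrow> 'b::topological_space) \<Rightarrow> 'b set \<Rightarrow> bool" where
  "local_sections M f S \<longleftrightarrow>
     (\<forall>b\<in>M. \<exists>W s. openin (top_of_set S) W \<and> f b \<in> W \<and> continuous_on W s \<and> s ` W \<subseteq> M \<and>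
                 (\<forall>y\<in>W. f (s y) = y) \<and> s (f b) = b)"

lemma openin_image_local_sections:
  assumes sec: "local_sections M f S" and V: "openin (top_of_set M) V"
  shows "openin (top_of_set S) (f ` V)"
proof (subst openin_subopen, intro ballI)
  fix z assume "z \<in> f ` V"
  then obtain b where b: "b \<in> V" "z = f b" by auto
  have "b \<in> M" using V b openin_imp_subset by blast
  then obtain W s where W: "openin (top_of_set S) W" "f b \<in> W" "continuous_on W s"
      "s ` W \<subseteq> M" "\<forall>y\<in>W. f (s y) = y" "s (f b) = b"
    using sec unfolding local_sections_def by blast
  have "openin (top_of_set W) (W \<inter> s -` V)"
    by (rule continuous_openin_preimage[OF W(3) _ V]) (use W(4) in auto)
  hence "openin (top_of_set S) (W \<inter> s -` V)" using W(1) openin_trans by blast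
  moreover have "W \<inter> s -` V \<subseteq> f ` V" using W(5) by force
  moreover have "z \<in> W \<inter> s -` V" using W b by auto
  ultimately show "\<exists>T. openin (top_of_set S) T \<and> z \<in> T \<and> T \<subseteq> f ` V" by blast
qed

lemma eq_classes_kernel:
  assumes "\<And>x y. x \<in> M \<Longrightarrow> y \<in> M \<Longrightarrow> R x y \<longleftrightarrow> f x = f y"
  shows "eq_classes (top_of_set M) R = (\<lambda>y. {x \<in> M. f x = y}) ` f ` M"
proof -
  have "eq_classes (top_of_set M) R = {{y \<in> M. f x = f y} | x. x \<in> M}"
    unfolding eq_classes_def using assms by (auto intro!: Collect_cong)
  also have "\<dots> = (\<lambda>y. {x \<in> M. f x = y}) ` f ` M"
  proof -
    have "{y \<in> M. f x = f y} = {y \<in> M. f y = f x}" for x by auto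
    thus ?thesis by blast
  qed
  finally show ?thesis .
qed

lemma openin_quotient_topology_kernel:
  assumes R: "\<And>x y. x \<in> M \<Longrightarrow> y \<in> M \<Longrightarrow> R x y \<longleftrightarrow> f x = f y"
  shows "openin (quotient_topology (top_of_set M) R) U \<longleftrightarrow>
           U \<subseteq> (\<lambda>y. {x \<in> M. f x = y}) ` f ` M \<and> openin (top_of_set M) (\<Union>U)"
proof -
  define C where "C = (\<lambda>y. {x \<in> M. f x = y}) ` f ` M"
  have disjoint: "\<Union>(U \<inter> V) = \<Union>U \<inter> \<Union>V" if UV: "U \<subseteq> C" "V \<subseteq> C" for U V
  proof
    show "\<Union>U \<inter> \<Union>V \<subseteq> \<Union>(U \<inter> V)"
    proof
      fix x assume "x \<in> \<Union>U \<inter> \<Union>V"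
      then obtain A B where AB: "x \<in> A" "A \<in> U" "x \<in> B" "B \<in> V" by auto
      obtain a b where ab: "A = {x \<in> M. f x = a}" "B = {x \<in> M. f x = b}"
        using UV AB unfolding C_def by blast
      have "a = f x" "b = f x" using AB(1,3) ab by auto
      hence "A = B" using ab by simp
      thus "x \<in> \<Union>(U \<inter> V)" using AB by auto
    qed
  qed auto
  have "istopology (\<lambda>U. U \<subseteq> C \<and> openin (top_of_set M) (\<Union>U))"
    unfolding istopology_def
  proof (intro conjI allI impI)
    fix U V assume "U \<subseteq> C \<and> openin (top_of_set M) (\<Union>U)" "V \<subseteq> C \<and> openin (top_of_set M) (\<Union>V)"
    thus "U \<inter> V \<subseteq> C" "openin (top_of_set M) (\<Union>(U \<inter> V))" using disjoint by auto
  next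
    fix K assume K: "\<forall>U\<in>K. U \<subseteq> C \<and> openin (top_of_set M) (\<Union>U)"
    have "openin (top_of_set M) (\<Union>(Union ` K))"
      by (rule openin_Union) (use K in auto)
    moreover have "\<Union>(\<Union>K) = \<Union>(Union ` K)" by auto
    ultimately show "\<Union>K \<subseteq> C" "openin (top_of_set M) (\<Union>(\<Union>K))" using K by auto
  qed
  moreover have "eq_classes (top_of_set M) R = C"
    unfolding C_def by (rule eq_classes_kernel[OF R])
  ultimately show ?thesis
    unfolding quotient_topology_def C_def[symmetric] by (simp add: topology_inverse')
qed

lemma quotient_topology_homeomorphic_image:
  assumes contf: "continuous_on M f" and S: "S = f ` M"
    and R: "\<And>x y. x \<in> M \<Longrightarrow> y \<in> M \<Longrightarrow> R x y \<longleftrightarrow> f x = f y"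
    and sec: "local_sections M f S"
  defines "\<phi> \<equiv> \<lambda>c. f (SOME x. x \<in> c)" and "\<psi> \<equiv> \<lambda>y. {x \<in> M. f x = y}"
  shows "continuous_map (quotient_topology (top_of_set M) R) (top_of_set S) \<phi>"
    and "continuous_map (top_of_set S) (quotient_topology (top_of_set M) R) \<psi>"
    and "\<And>c. c \<in> topspace (quotient_topology (top_of_set M) R) \<Longrightarrow> \<psi> (\<phi> c) = c"
    and "\<And>y. y \<in> S \<Longrightarrow> \<phi> (\<psi> y) = y"
proof -
  let ?Q = "quotient_topology (top_of_set M) R"
  have open_Q: "openin ?Q U \<longleftrightarrow> U \<subseteq> \<psi> ` S \<and> openin (top_of_set M) (\<Union>U)" for U
    unfolding \<psi>_def S by (rule openin_quotient_topology_kernel[OF R])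
  have topspace_Q: "topspace ?Q = \<psi> ` S"
  proof -
    have "\<Union>(\<psi> ` S) = M" unfolding S \<psi>_def by auto
    hence "openin ?Q (\<psi> ` S)" using open_Q by simp
    hence "\<psi> ` S \<subseteq> topspace ?Q" by (rule openin_subset)
    moreover have "topspace ?Q \<subseteq> \<psi> ` S" unfolding topspace_def using open_Q by auto
    ultimately show ?thesis by blast
  qed
  show \<phi>\<psi>: "\<phi> (\<psi> y) = y" if "y \<in> S" for y
  proof -
    have "\<psi> y \<noteq> {}" using that unfolding S \<psi>_def by auto
    hence "(SOME x. x \<in> \<psi> y) \<in> \<psi> y" by (meson ex_in_conv someI_ex)
    thus ?thesis unfolding \<phi>_def \<psi>_def by simp
  qed
  show "\<psi> (\<phi> c) = c" if "c \<in> topspace ?Q" for c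
    using that topspace_Q \<phi>\<psi> by auto
  show "continuous_map ?Q (top_of_set S) \<phi>"
    unfolding continuous_map_def
  proof (intro conjI allI impI)
    show "\<phi> \<in> topspace ?Q \<rightarrow> topspace (top_of_set S)"
      using topspace_Q \<phi>\<psi> by auto
    fix U assume U: "openin (top_of_set S) U"
    have "{c \<in> topspace ?Q. \<phi> c \<in> U} = \<psi> ` U"
      using topspace_Q \<phi>\<psi> openin_imp_subset[OF U] by fastforce
    moreover have "\<Union>(\<psi> ` U) = M \<inter> f -` U" using openin_imp_subset[OF U] unfolding \<psi>_def S by auto
    moreover have "openin (top_of_set M) (M \<inter> f -` U)"
      by (rule continuous_openin_preimage[OF contf _ U]) (simp add: S)
    ultimately show "openin ?Q {c \<in> topspace ?Q. \<phi> c \<in> U}"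
      unfolding open_Q using openin_imp_subset[OF U] by auto
  qed
  show "continuous_map (top_of_set S) ?Q \<psi>"
    unfolding continuous_map_def
  proof (intro conjI allI impI)
    show "\<psi> \<in> topspace (top_of_set S) \<rightarrow> topspace ?Q" using topspace_Q by auto
    fix U assume "openin ?Q U"
    hence U: "U \<subseteq> \<psi> ` S" "openin (top_of_set M) (\<Union>U)" using open_Q by auto
    have "{y \<in> topspace (top_of_set S). \<psi> y \<in> U} = f ` \<Union>U"
    proof
      show "{y \<in> topspace (top_of_set S). \<psi> y \<in> U} \<subseteq> f ` \<Union>U"
        unfolding \<psi>_def S by force
      show "f ` \<Union>U \<subseteq> {y \<in> topspace (top_of_set S). \<psi> y \<in> U}"
        using U(1) unfolding \<psi>_def S by force
    qed
    thus "openin (top_of_set S) {y \<in> topspace (top_of_set S). \<psi> y \<in> U}"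
      using openin_image_local_sections[OF sec U(2)] by simp
  qed
qed

lemma fundamental_group_quotient_iso:
  fixes f :: "'a::topological_space \<Rightarrow> 'b::real_normed_vector" and G :: "('c,'d) monoid_scheme"
  assumes "continuous_on M f" and S: "S = f ` M"
    and "\<And>x y. x \<in> M \<Longrightarrow> y \<in> M \<Longrightarrow> R x y \<longleftrightarrow> f x = f y"
    and "local_sections M f S"
    and x0: "x0 \<in> topspace (quotient_topology (top_of_set M) R)"
    and invariant: "\<And>y. y \<in> S \<Longrightarrow> \<exists>\<kappa>. complete_loop_invariant S y \<kappa> G"
  shows "fundamental_group (quotient_topology (top_of_set M) R) x0 \<cong> G"
proof -
  let ?Q = "quotient_topology (top_of_set M) R"
  obtain \<phi> \<psi> where homeo: "continuous_map ?Q (top_of_set S) \<phi>" "continuous_map (top_of_set S) ?Q \<psi>"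
    "\<And>c. c \<in> topspace ?Q \<Longrightarrow> \<psi> (\<phi> c) = c" "\<And>y. y \<in> S \<Longrightarrow> \<phi> (\<psi> y) = y"
    using quotient_topology_homeomorphic_image[OF assms(1-4)] by blast
  have "\<phi> x0 \<in> S"
    using homeo(1) x0 continuous_map_image_subset_topspace by fastforce
  then obtain \<kappa> where "complete_loop_invariant S (\<phi> x0) \<kappa> G"
    using invariant by blast
  with homeo x0 show ?thesis
    by (intro fundamental_group_iso_by_homeomorphism[where \<phi>=\<phi> and \<psi>=\<psi>]) auto
qed

section \<open>The two model spaces\<close>

lemma loop_winding_number_one:
  fixes y0 :: complex
  assumes "y0 \<noteq> 0"
  shows "\<exists>g\<in>loops_in (- {0}) y0. winding_number g 0 = 1"
proof -
  define r where "r = cmod y0"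
  have r: "r > 0" using assms by (simp add: r_def)
  define \<theta> where "\<theta> = (if Arg y0 \<ge> 0 then Arg y0 else Arg y0 + 2 * pi)"
  define a where "a = \<theta> / (2 * pi)"
  have "0 \<le> \<theta>" "\<theta> \<le> 2 * pi" using Arg_bounded[of y0] by (auto simp: \<theta>_def)
  hence a: "a \<in> {0..1}" by (auto simp: a_def field_simps)
  have "exp (\<i> * of_real \<theta>) = exp (\<i> * of_real (Arg y0))"
  proof (cases "Arg y0 \<ge> 0")
    case False
    have "exp (\<i> * of_real (Arg y0 + 2 * pi)) = exp (\<i> * of_real (Arg y0) + \<i> * (of_int 1 * (of_real pi * 2)))"
      by (simp add: algebra_simps)
    also have "\<dots> = exp (\<i> * of_real (Arg y0))" by (rule exp_plus_2pin)
    finally show ?thesis using False by (simp add: \<theta>_def)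
  qed (simp add: \<theta>_def)
  hence ca: "circlepath 0 r a = y0"
    using Arg_eq[OF assms] by (simp add: circlepath a_def r_def algebra_simps)
  have c: "path (circlepath 0 r)" "pathfinish (circlepath 0 r) = pathstart (circlepath 0 r)"
    and no0: "0 \<notin> path_image (circlepath 0 r)"
    using r by (auto simp: path_image_circlepath)
  define g where "g = shiftpath a (circlepath 0 r)"
  have "g \<in> loops_in (- {0}) y0"
    unfolding loops_in_def g_def using a c no0 ca
    by (auto simp: path_shiftpath path_image_shiftpath pathstart_shiftpath pathfinish_shiftpath)
  moreover have "winding_number g 0 = 1"
    unfolding g_def using winding_number_shiftpath[OF c(1) no0 c(2) a] winding_number_circlepath_centre[OF r]
    by simp
  ultimately show ?thesis by blast
qed

definition winding_int :: "(real \<Rightarrow> complex) \<Rightarrow> int" where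
  "winding_int g = \<lfloor>Re (winding_number g 0)\<rfloor>"

lemma winding_number_eq_winding_int:
  assumes "g \<in> loops_in (- {0}) y0"
  shows "winding_number g 0 = of_int (winding_int g)"
proof -
  have "winding_number g 0 \<in> \<int>"
    using assms unfolding loops_in_def by (intro integer_winding_number) auto
  then obtain k where "winding_number g 0 = of_int k" by (auto elim: Ints_cases)
  thus ?thesis by (simp add: winding_int_def)
qed

lemma winding_int_join:
  assumes "g \<in> loops_in (- {0}) y0" "g' \<in> loops_in (- {0}) y0"
  shows "winding_int (g +++ g') = winding_int g + winding_int g'"
proof -
  have "winding_number (g +++ g') 0 = winding_number g 0 + winding_number g' 0"
    using assms unfolding loops_in_def by (intro winding_number_join) auto
  hence "(of_int (winding_int (g +++ g')) :: complex) = of_int (winding_int g + winding_int g')"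
    using winding_number_eq_winding_int[OF assms(1)] winding_number_eq_winding_int[OF assms(2)]
      winding_number_eq_winding_int[OF joinpaths_in_loops_in[OF assms]] by simp
  thus ?thesis by (simp only: of_int_eq_iff)
qed

text \<open>Every integer is attained by iterating a circle around \<open>0\<close> and its reverse.\<close>

lemma winding_int_image:
  fixes y0 :: complex
  assumes y0: "y0 \<noteq> 0"
  shows "winding_int ` loops_in (- {0}) y0 = UNIV"
proof -
  let ?L = "loops_in (- {0}) y0"
  obtain c where c: "c \<in> ?L" "winding_number c 0 = 1" using loop_winding_number_one[OF y0] by blast
  have rc: "reversepath c \<in> ?L" using c(1) unfolding loops_in_def by auto
  have "winding_number (reversepath c) 0 = -1"
    using c unfolding loops_in_def by (simp add: winding_number_reversepath)
  hence wc: "winding_int c = 1" "winding_int (reversepath c) = -1"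
    using winding_number_eq_winding_int[OF c(1)] winding_number_eq_winding_int[OF rc] c(2)
    by (metis of_int_1 of_int_eq_iff of_int_minus)+
  have const: "linepath y0 y0 \<in> ?L" "winding_int (linepath y0 y0) = 0"
    using y0 by (auto simp: loops_in_def winding_int_def)
  have powers: "\<exists>g\<in>?L. winding_int g = int n \<and> (\<exists>g'\<in>?L. winding_int g' = - int n)" for n
  proof (induction n)
    case 0 thus ?case using const by auto
  next
    case (Suc n)
    then obtain g g' where "g \<in> ?L" "winding_int g = int n" "g' \<in> ?L" "winding_int g' = - int n"
      by blast
    hence "g +++ c \<in> ?L \<and> winding_int (g +++ c) = int (Suc n)"
      "g' +++ reversepath c \<in> ?L \<and> winding_int (g' +++ reversepath c) = - int (Suc n)"
      using winding_int_join[OF _ c(1)] winding_int_join[OF _ rc] joinpaths_in_loops_in c(1) rc wc by auto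
    thus ?case by blast
  qed
  have "k \<in> winding_int ` ?L" for k :: int
  proof (cases "k \<ge> 0")
    case True
    hence "k = int (nat k)" by simp
    thus ?thesis using powers[of "nat k"] by force
  next
    case False
    hence "k = - int (nat (- k))" by simp
    thus ?thesis using powers[of "nat (- k)"] by force
  qed
  thus ?thesis by blast
qed

lemma complete_loop_invariant_winding_int:
  fixes y0 :: complex
  assumes y0: "y0 \<noteq> 0"
  shows "complete_loop_invariant (- {0}) y0 winding_int integer_group"
proof (rule complete_loop_invariantI)
  show "winding_int g = winding_int g' \<longleftrightarrow> homotopic_paths (- {0}) g g'"
    if "g \<in> loops_in (- {0}) y0" "g' \<in> loops_in (- {0}) y0" for g g'
    using winding_number_homotopic_paths_eq[of g 0 g'] winding_number_eq_winding_int[OF that(1)]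
      winding_number_eq_winding_int[OF that(2)] that
    unfolding loops_in_def by auto
  show "carrier integer_group \<subseteq> winding_int ` loops_in (- {0}) y0"
    using winding_int_image[OF y0] by simp
qed (use winding_int_join in \<open>simp_all add: integer_group_def\<close>)

definition is_path_lift :: "'a set \<Rightarrow> ('a \<Rightarrow> 'b) \<Rightarrow> (real \<Rightarrow> 'a::topological_space) \<Rightarrow> (real \<Rightarrow> 'b) \<Rightarrow> bool" where
  "is_path_lift T p \<beta> g \<longleftrightarrow> path \<beta> \<and> path_image \<beta> \<subseteq> T \<and> (\<forall>t\<in>{0..1}. p (\<beta> t) = g t)"

lemma is_path_lift_join:
  assumes "is_path_lift T p \<beta> g" "is_path_lift T p \<beta>' g'" "pathfinish \<beta> = pathstart \<beta>'"
  shows "is_path_lift T p (\<beta> +++ \<beta>') (g +++ g')"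
proof -
  have "path (\<beta> +++ \<beta>')" "path_image (\<beta> +++ \<beta>') \<subseteq> T"
    using assms path_image_join_subset[of \<beta> \<beta>'] unfolding is_path_lift_def by auto
  moreover have "\<forall>t\<in>{0..1}. p ((\<beta> +++ \<beta>') t) = (g +++ g') t"
    using assms unfolding is_path_lift_def by (auto simp: joinpaths_def)
  ultimately show ?thesis unfolding is_path_lift_def by blast
qed

lemma homotopic_paths_iff_lift_endpoints:
  fixes p :: "'a::real_normed_vector \<Rightarrow> 'b::real_normed_vector"
  assumes cov: "covering_space T p S" and sc: "simply_connected T"
    and g: "path g" "path_image g \<subseteq> S" and g': "path g'" "path_image g' \<subseteq> S"
    and \<beta>: "is_path_lift T p \<beta> g" and \<beta>': "is_path_lift T p \<beta>' g'"
    and start: "pathstart \<beta> = pathstart \<beta>'"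
  shows "homotopic_paths S g g' \<longleftrightarrow> pathfinish \<beta> = pathfinish \<beta>'"
proof
  assume "homotopic_paths S g g'"
  thus "pathfinish \<beta> = pathfinish \<beta>'"
    using \<beta> \<beta>' g g' start unfolding is_path_lift_def
    by (intro covering_space_monodromy[OF cov]) auto
next
  have "continuous_on T p" "p ` T = S" using cov by (auto simp: covering_space_def)
  assume "pathfinish \<beta> = pathfinish \<beta>'"
  hence "homotopic_paths T \<beta> \<beta>'"
    using sc \<beta> \<beta>' start unfolding simply_connected_eq_homotopic_paths is_path_lift_def by auto
  hence "homotopic_paths S (p \<circ> \<beta>) (p \<circ> \<beta>')"
    using \<open>continuous_on T p\<close> \<open>p ` T = S\<close> by (intro homotopic_paths_continuous_image) auto
  moreover have "homotopic_paths S g (p \<circ> \<beta>)"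
    by (rule homotopic_paths_eq[OF g]) (use \<beta> in \<open>simp add: is_path_lift_def\<close>)
  moreover have "homotopic_paths S g' (p \<circ> \<beta>')"
    by (rule homotopic_paths_eq[OF g']) (use \<beta>' in \<open>simp add: is_path_lift_def\<close>)
  ultimately show "homotopic_paths S g g'"
    by (meson homotopic_paths_trans homotopic_paths_sym)
qed

definition fibre_involution :: "'a::topological_space set \<Rightarrow> ('a \<Rightarrow> 'b) \<Rightarrow> ('a \<Rightarrow> 'a) \<Rightarrow> bool" where
  "fibre_involution T p \<sigma> \<longleftrightarrow>
     continuous_on T \<sigma> \<and> \<sigma> ` T \<subseteq> T \<and> (\<forall>x\<in>T. \<sigma> x \<noteq> x \<and> p (\<sigma> x) = p x) \<and>
     (\<forall>x\<in>T. \<forall>y\<in>T. p y = p x \<longrightarrow> y = x \<or> y = \<sigma> x)"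

lemma fibre_involution_involutive:
  assumes "fibre_involution T p \<sigma>" "x \<in> T"
  shows "\<sigma> (\<sigma> x) = x"
proof -
  have \<sigma>x: "\<sigma> x \<in> T" using assms unfolding fibre_involution_def by blast
  hence "\<sigma> (\<sigma> x) \<in> T" "p (\<sigma> (\<sigma> x)) = p x" "\<sigma> (\<sigma> x) \<noteq> \<sigma> x"
    using assms unfolding fibre_involution_def by auto
  thus ?thesis using assms(2) \<sigma>x assms(1) unfolding fibre_involution_def by blast
qed

lemma is_path_lift_fibre_involution:
  assumes "fibre_involution T p \<sigma>" "is_path_lift T p \<beta> g"
  shows "is_path_lift T p (\<sigma> \<circ> \<beta>) g"
proof -
  have \<sigma>: "continuous_on T \<sigma>" "\<sigma> ` T \<subseteq> T" "\<forall>x\<in>T. p (\<sigma> x) = p x"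
    using assms(1) unfolding fibre_involution_def by auto
  have \<beta>: "path \<beta>" "path_image \<beta> \<subseteq> T" "\<forall>t\<in>{0..1}. p (\<beta> t) = g t"
    using assms(2) unfolding is_path_lift_def by auto
  have "path (\<sigma> \<circ> \<beta>)" using \<beta>(1) continuous_on_subset[OF \<sigma>(1) \<beta>(2)] by (rule path_continuous_image)
  moreover have "path_image (\<sigma> \<circ> \<beta>) \<subseteq> T" using \<sigma>(2) \<beta>(2) by (auto simp: path_image_compose)
  moreover have "\<forall>t\<in>{0..1}. p ((\<sigma> \<circ> \<beta>) t) = g t" using \<sigma>(3) \<beta> by (auto simp: path_image_def)
  ultimately show ?thesis unfolding is_path_lift_def by blast
qed

lemma exists_path_lift:
  fixes p :: "'a::real_normed_vector \<Rightarrow> 'b::real_normed_vector"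
  assumes "covering_space T p S" "e0 \<in> T" and g: "g \<in> loops_in S (p e0)"
  obtains \<beta> where "is_path_lift T p \<beta> g" "pathstart \<beta> = e0"
proof -
  have "path g" "path_image g \<subseteq> S" "pathstart g = p e0" using g by (auto simp: loops_in_def)
  from covering_space_lift_path_strong[OF assms(1,2) this] obtain \<beta> where
    "path \<beta>" "path_image \<beta> \<subseteq> T" "pathstart \<beta> = e0" "\<And>t. t \<in> {0..1} \<Longrightarrow> p (\<beta> t) = g t"
    by blast
  thus ?thesis using that unfolding is_path_lift_def by blast
qed

context
  fixes p :: "'a::real_normed_vector \<Rightarrow> 'b::real_normed_vector" and T S \<sigma>
  assumes cov: "covering_space T p S" and sc: "simply_connected T" and \<sigma>: "fibre_involution T p \<sigma>"
begin

text \<open>Loops at \<open>p e\<^sub>0\<close> are classified by the sheet on which their lift from \<open>e\<^sub>0\<close> ends.\<close>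

definition lift_sheet :: "'a \<Rightarrow> (real \<Rightarrow> 'b) \<Rightarrow> int" where
  "lift_sheet e0 g = (if pathfinish (SOME \<beta>. is_path_lift T p \<beta> g \<and> pathstart \<beta> = e0) = e0 then 0 else 1)"

lemma pathfinish_lift_in_fibre:
  assumes "e0 \<in> T" "g \<in> loops_in S (p e0)" "is_path_lift T p \<beta> g" "pathstart \<beta> = e0"
  shows "pathfinish \<beta> = e0 \<or> pathfinish \<beta> = \<sigma> e0"
proof -
  have "pathfinish \<beta> \<in> T" "p (pathfinish \<beta>) = p e0"
    using assms pathfinish_in_path_image[of \<beta>]
    unfolding is_path_lift_def loops_in_def pathfinish_def by auto
  thus ?thesis using \<sigma> assms(1) unfolding fibre_involution_def by blast
qed

lemma lift_sheet_eq:
  assumes "g \<in> loops_in S (p e0)" "is_path_lift T p \<beta> g" "pathstart \<beta> = e0"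
  shows "lift_sheet e0 g = (if pathfinish \<beta> = e0 then 0 else 1)"
proof -
  let ?\<beta> = "SOME \<beta>. is_path_lift T p \<beta> g \<and> pathstart \<beta> = e0"
  have some: "is_path_lift T p ?\<beta> g \<and> pathstart ?\<beta> = e0"
    using assms(2,3) by (rule someI[where P="\<lambda>\<beta>. is_path_lift T p \<beta> g \<and> pathstart \<beta> = e0", OF conjI])
  have g: "path g" "path_image g \<subseteq> S" using assms(1) by (auto simp: loops_in_def)
  hence "homotopic_paths S g g" by simp
  hence "pathfinish ?\<beta> = pathfinish \<beta>"
    using homotopic_paths_iff_lift_endpoints[OF cov sc g g conjunct1[OF some] assms(2)] some assms(3)
    by simp
  thus ?thesis by (simp add: lift_sheet_def)
qed

lemma lift_sheet_join:
  assumes e0: "e0 \<in> T" and g: "g \<in> loops_in S (p e0)" and g': "g' \<in> loops_in S (p e0)"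
  shows "lift_sheet e0 (g +++ g') = (lift_sheet e0 g + lift_sheet e0 g') mod 2"
proof -
  obtain \<beta> where \<beta>: "is_path_lift T p \<beta> g" "pathstart \<beta> = e0"
    by (rule exists_path_lift[OF cov e0 g])
  obtain \<beta>' where \<beta>': "is_path_lift T p \<beta>' g'" "pathstart \<beta>' = e0"
    by (rule exists_path_lift[OF cov e0 g'])
  have \<sigma>e0: "\<sigma> e0 \<noteq> e0" "\<sigma> (\<sigma> e0) = e0"
    using \<sigma> e0 fibre_involution_involutive unfolding fibre_involution_def by auto
  note finish = pathfinish_lift_in_fibre[OF e0 g \<beta>] pathfinish_lift_in_fibre[OF e0 g' \<beta>']
  txt \<open>On the second sheet, continue with the lift of \<open>g'\<close> moved by the deck involution.\<close>
  define \<beta>'' where "\<beta>'' = (if pathfinish \<beta> = e0 then \<beta>' else \<sigma> \<circ> \<beta>')"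
  have "is_path_lift T p \<beta>'' g'" "pathstart \<beta>'' = pathfinish \<beta>"
    using \<beta>' is_path_lift_fibre_involution[OF \<sigma>] finish(1) unfolding \<beta>''_def by (auto simp: pathstart_def)
  hence "lift_sheet e0 (g +++ g') = (if pathfinish \<beta>'' = e0 then 0 else 1)"
    using lift_sheet_eq[OF joinpaths_in_loops_in[OF g g'], of "\<beta> +++ \<beta>''"] \<beta>
      is_path_lift_join[of T p \<beta> g \<beta>'' g'] by simp
  moreover have "pathfinish \<beta>'' = (if pathfinish \<beta> = e0 then pathfinish \<beta>' else \<sigma> (pathfinish \<beta>'))"
    by (simp add: \<beta>''_def pathfinish_def)
  ultimately show ?thesis
    using lift_sheet_eq[OF g \<beta>] lift_sheet_eq[OF g' \<beta>'] finish \<sigma>e0 by auto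
qed

lemma lift_sheet_image:
  assumes e0: "e0 \<in> T"
  shows "lift_sheet e0 ` loops_in S (p e0) = {0, 1}"
proof -
  have p: "continuous_on T p" "p ` T = S" using cov by (auto simp: covering_space_def)
  have \<sigma>e0: "\<sigma> e0 \<in> T" "\<sigma> e0 \<noteq> e0" using \<sigma> e0 unfolding fibre_involution_def by auto
  have const: "linepath (p e0) (p e0) \<in> loops_in S (p e0)" using e0 p by (auto simp: loops_in_def)
  have "is_path_lift T p (linepath e0 e0) (linepath (p e0) (p e0))"
    using e0 by (auto simp: is_path_lift_def)
  hence "lift_sheet e0 (linepath (p e0) (p e0)) = 0" using lift_sheet_eq[OF const] by simp
  hence zero: "0 \<in> lift_sheet e0 ` loops_in S (p e0)" using const by (metis image_eqI)
  obtain q where q: "path q" "path_image q \<subseteq> T" "pathstart q = e0" "pathfinish q = \<sigma> e0"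
    using sc e0 \<sigma>e0 simply_connected_imp_path_connected unfolding path_connected_def by blast
  have pq: "p \<circ> q \<in> loops_in S (p e0)"
    using q p e0 \<sigma> unfolding loops_in_def fibre_involution_def
    by (auto intro!: path_continuous_image continuous_on_subset[OF p(1)]
        simp: path_image_compose pathstart_compose pathfinish_compose)
  have "is_path_lift T p q (p \<circ> q)" using q by (auto simp: is_path_lift_def)
  hence "lift_sheet e0 (p \<circ> q) = 1" using lift_sheet_eq[OF pq _ q(3)] q(4) \<sigma>e0(2) by simp
  hence "1 \<in> lift_sheet e0 ` loops_in S (p e0)" using pq by (metis image_eqI)
  moreover have "lift_sheet e0 ` loops_in S (p e0) \<subseteq> {0, 1}" by (auto simp: lift_sheet_def)
  ultimately show ?thesis using zero by blast
qed

lemma complete_loop_invariant_lift_sheet: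
  assumes e0: "e0 \<in> T"
  shows "complete_loop_invariant S (p e0) (lift_sheet e0) (integer_mod_group 2)"
proof (rule complete_loop_invariantI)
  let ?L = "loops_in S (p e0)"
  show "lift_sheet e0 g = lift_sheet e0 g' \<longleftrightarrow> homotopic_paths S g g'" if g: "g \<in> ?L" and g': "g' \<in> ?L" for g g'
  proof -
    obtain \<beta> where \<beta>: "is_path_lift T p \<beta> g" "pathstart \<beta> = e0"
      by (rule exists_path_lift[OF cov e0 g])
    obtain \<beta>' where \<beta>': "is_path_lift T p \<beta>' g'" "pathstart \<beta>' = e0"
      by (rule exists_path_lift[OF cov e0 g'])
    have paths: "path g" "path_image g \<subseteq> S" "path g'" "path_image g' \<subseteq> S"
      using g g' by (auto simp: loops_in_def)
    have "\<sigma> e0 \<noteq> e0" using \<sigma> e0 unfolding fibre_involution_def by auto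
    thus ?thesis
      using homotopic_paths_iff_lift_endpoints[OF cov sc paths \<beta>(1) \<beta>'(1)] \<beta>(2) \<beta>'(2)
        lift_sheet_eq[OF g \<beta>] lift_sheet_eq[OF g' \<beta>']
        pathfinish_lift_in_fibre[OF e0 g \<beta>] pathfinish_lift_in_fibre[OF e0 g' \<beta>'] by auto
  qed
  have carrier: "carrier (integer_mod_group 2) = {0, 1}"
    by (auto simp: carrier_integer_mod_group)
  show "lift_sheet e0 g \<in> carrier (integer_mod_group 2)" if "g \<in> ?L" for g
    using lift_sheet_image[OF e0] that carrier by blast
  show "carrier (integer_mod_group 2) \<subseteq> lift_sheet e0 ` ?L" using lift_sheet_image[OF e0] carrier by simp
  show "lift_sheet e0 (g +++ g') = lift_sheet e0 g \<otimes>\<^bsub>integer_mod_group 2\<^esub> lift_sheet e0 g'"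
    if "g \<in> ?L" "g' \<in> ?L" for g g'
    using lift_sheet_join[OF e0 that] by (simp add: integer_mod_group_def)
qed

end

lemma covering_space_fibre_involution:
  fixes p :: "'a::real_normed_vector \<Rightarrow> 'b::real_normed_vector"
  assumes p: "continuous_on T p" and \<sigma>: "fibre_involution T p \<sigma>"
    and sheet: "\<And>x. x \<in> T \<Longrightarrow> \<exists>U q. x \<in> U \<and> openin (top_of_set T) U \<and> U \<inter> \<sigma> ` U = {} \<and>
                   openin (top_of_set (p ` T)) (p ` U) \<and> homeomorphism U (p ` U) p q"
  shows "covering_space T p (p ` T)"
proof (rule covering_spaceI[OF p refl])
  have \<sigma>T: "continuous_on T \<sigma>" "\<sigma> ` T \<subseteq> T" "\<And>x. x \<in> T \<Longrightarrow> p (\<sigma> x) = p x"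
    using \<sigma> unfolding fibre_involution_def by auto
  have \<sigma>\<sigma>: "\<And>x. x \<in> T \<Longrightarrow> \<sigma> (\<sigma> x) = x" using fibre_involution_involutive[OF \<sigma>] .
  fix y assume "y \<in> p ` T"
  then obtain x where x: "x \<in> T" "y = p x" by auto
  obtain U q where U: "x \<in> U" "openin (top_of_set T) U" "U \<inter> \<sigma> ` U = {}"
      "openin (top_of_set (p ` T)) (p ` U)" "homeomorphism U (p ` U) p q"
    using sheet[OF x(1)] by blast
  have UT: "U \<subseteq> T" using U(2) by (rule openin_imp_subset)
  have \<sigma>U: "\<sigma> ` U = T \<inter> \<sigma> -` U"
  proof
    show "\<sigma> ` U \<subseteq> T \<inter> \<sigma> -` U" using UT \<sigma>T(2) \<sigma>\<sigma> by auto
    show "T \<inter> \<sigma> -` U \<subseteq> \<sigma> ` U" using \<sigma>\<sigma> by (metis IntE image_eqI subsetI vimageE)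
  qed
  have "homeomorphism (\<sigma> ` U) U \<sigma> \<sigma>"
  proof (rule homeomorphismI)
    show "continuous_on (\<sigma> ` U) \<sigma>" "continuous_on U \<sigma>"
      using UT \<sigma>T(2) by (auto intro: continuous_on_subset[OF \<sigma>T(1)])
    show "\<sigma> ` \<sigma> ` U \<subseteq> U" "\<sigma> ` U \<subseteq> \<sigma> ` U" using UT \<sigma>\<sigma> by (auto simp: subset_iff)
    show "\<sigma> (\<sigma> x) = x" if "x \<in> \<sigma> ` U" for x using that UT \<sigma>T(2) \<sigma>\<sigma> by auto
    show "\<sigma> (\<sigma> y) = y" if "y \<in> U" for y using that UT \<sigma>\<sigma> by auto
  qed
  hence "homeomorphism (\<sigma> ` U) (p ` U) (p \<circ> \<sigma>) (\<sigma> \<circ> q)"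
    using U(5) by (rule homeomorphism_compose)
  hence \<sigma>U_sheet: "homeomorphism (\<sigma> ` U) (p ` U) p (\<sigma> \<circ> q)"
    by (rule homeomorphism_cong) (use UT \<sigma>\<sigma> \<sigma>T(3) in \<open>auto simp: subset_iff\<close>)
  have preimage: "T \<inter> p -` (p ` U) = U \<union> \<sigma> ` U"
  proof
    show "T \<inter> p -` (p ` U) \<subseteq> U \<union> \<sigma> ` U"
    proof
      fix z assume "z \<in> T \<inter> p -` (p ` U)"
      then obtain u where "z \<in> T" "u \<in> U" "p z = p u" by auto
      hence "z = u \<or> z = \<sigma> u" using \<sigma> UT unfolding fibre_involution_def by blast
      thus "z \<in> U \<union> \<sigma> ` U" using \<open>u \<in> U\<close> by blast
    qed
    show "U \<union> \<sigma> ` U \<subseteq> T \<inter> p -` (p ` U)" using UT \<sigma>T by auto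
  qed
  have "openin (top_of_set T) (\<sigma> ` U)"
    unfolding \<sigma>U by (rule continuous_openin_preimage[OF \<sigma>T(1) _ U(2)]) (use \<sigma>T(2) in auto)
  show "\<exists>W. y \<in> W \<and> openin (top_of_set (p ` T)) W \<and>
          (\<exists>v. \<Union>v = T \<inter> p -` W \<and> (\<forall>u\<in>v. openin (top_of_set T) u) \<and>
               pairwise disjnt v \<and> (\<forall>u\<in>v. \<exists>q. homeomorphism u W p q))"
  proof (intro exI conjI)
    show "y \<in> p ` U" using U(1) x(2) by blast
    show "openin (top_of_set (p ` T)) (p ` U)" by (rule U(4))
    show "\<Union>{U, \<sigma> ` U} = T \<inter> p -` (p ` U)" using preimage by simp
    show "\<forall>u\<in>{U, \<sigma> ` U}. openin (top_of_set T) u" using U(2) \<open>openin (top_of_set T) (\<sigma> ` U)\<close> by blast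
    show "pairwise disjnt {U, \<sigma> ` U}" using U(3) by (auto simp: pairwise_def disjnt_def)
    show "\<forall>u\<in>{U, \<sigma> ` U}. \<exists>q. homeomorphism u (p ` U) p q" using U(5) \<sigma>U_sheet by blast
  qed
qed

definition parity_flip :: "('n::finite \<Rightarrow> bool) \<Rightarrow> complex^'n \<Rightarrow> complex^'n" where
  "parity_flip par b = (\<chi> i. if par i then - b$i else b$i)"

lemma parity_flip_scale: "parity_flip par (c *s b) = c *s parity_flip par b"
  by (simp add: parity_flip_def vec_eq_iff)

lemma gauge_equiv_iff:
  "gauge_equiv par b b' \<longleftrightarrow> (\<exists>c. cmod c = 1 \<and> (b' = c *s b \<or> b' = c *s parity_flip par b))"
proof
  assume "gauge_equiv par b b'"
  then obtain \<beta> \<eta> where "\<eta> = 1 \<or> \<eta> = -1"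
    "\<forall>i. b' $ i = exp (\<i> * of_real \<beta>) * (if par i then \<eta> else 1) * b $ i"
    unfolding gauge_equiv_def by blast
  thus "\<exists>c. cmod c = 1 \<and> (b' = c *s b \<or> b' = c *s parity_flip par b)"
    by (intro exI[of _ "exp (\<i> * of_real \<beta>)"]) (auto simp: vec_eq_iff parity_flip_def)
next
  assume "\<exists>c. cmod c = 1 \<and> (b' = c *s b \<or> b' = c *s parity_flip par b)"
  then obtain c where "cmod c = 1" "b' = c *s b \<or> b' = c *s parity_flip par b" by blast
  then obtain \<eta> where c: "cmod c = 1" "\<eta> = 1 \<or> \<eta> = -1"
    "\<forall>i. b' $ i = c * (if par i then \<eta> else 1) * b $ i"
  proof (elim disjE)
    assume "b' = c *s b" thus ?thesis using that[of 1] \<open>cmod c = 1\<close> by simp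
  next
    assume "b' = c *s parity_flip par b" thus ?thesis using that[of "-1"] \<open>cmod c = 1\<close>
      by (simp add: parity_flip_def)
  qed
  moreover have "c \<noteq> 0" using c(1) by auto
  hence "c = exp (\<i> * of_real (Arg c))"
    using Arg_eq[of c] c(1) by simp
  ultimately show "gauge_equiv par b b'"
    unfolding gauge_equiv_def by (intro exI[of _ "Arg c"] bexI[of _ \<eta>]) auto
qed

lemma sum_cmod_power2_eq_norm_power2: "(\<Sum>i\<in>UNIV. (cmod (b$i))\<^sup>2) = (norm b)\<^sup>2"
  by (simp add: norm_vec_def L2_set_def sum_nonneg)

lemma scale_in_Mtilde: "cmod c = 1 \<Longrightarrow> b \<in> Mtilde par \<Longrightarrow> c *s b \<in> Mtilde par"
  by (auto simp: Mtilde_def norm_mult)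

lemma parity_flip_in_Mtilde: "b \<in> Mtilde par \<Longrightarrow> parity_flip par b \<in> Mtilde par"
  by (auto simp: Mtilde_def parity_flip_def if_distrib[of cmod] cong: if_cong)

section \<open>One fermion flavour\<close>

text \<open>With one even index \<open>e\<close> and one odd index \<open>od\<close>, the gauge class of \<open>b\<close> is recorded by
  \<open>(b\<^sub>o\<^sub>d / b\<^sub>e)\<^sup>2 \<in> \<complex> - {0}\<close>: the ratio kills the phase, the square kills the sign \<open>\<eta>\<close>.\<close>

definition squared_ratio :: "'n \<Rightarrow> 'n \<Rightarrow> complex^'n \<Rightarrow> complex" where
  "squared_ratio e od b = (b$od / b$e)\<^sup>2"

definition ratio_lift :: "('n::finite \<Rightarrow> bool) \<Rightarrow> complex \<Rightarrow> complex^'n" where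
  "ratio_lift par w = (\<chi> i. (if par i then w else 1) / of_real (sqrt (1 + (cmod w)\<^sup>2)))"

locale two_indices =
  fixes par :: "'n::finite \<Rightarrow> bool" and e od :: 'n
  assumes UNIV_eq: "UNIV = {e, od}" and even: "\<not> par e" and odd: "par od"
begin

lemma e_neq_od: "e \<noteq> od"
  using even odd by auto

lemma index_cases: "i = e \<or> i = od"
  using UNIV_eq by auto

lemma sqrt_one_plus_power2_pos: "sqrt (1 + (cmod w)\<^sup>2) > 0"
  by (simp add: add_pos_nonneg)

lemma Mtilde_iff: "b \<in> Mtilde par \<longleftrightarrow> (cmod (b$e))\<^sup>2 + (cmod (b$od))\<^sup>2 = 1 \<and> b$e \<noteq> 0 \<and> b$od \<noteq> 0"
proof -
  have "(\<Sum>i\<in>UNIV. (cmod (b$i))\<^sup>2) = (cmod (b$e))\<^sup>2 + (cmod (b$od))\<^sup>2"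
    unfolding UNIV_eq using e_neq_od by simp
  moreover have "(\<exists>i. \<not> par i \<and> b $ i \<noteq> 0) \<longleftrightarrow> b$e \<noteq> 0"
    by (metis index_cases even odd)
  moreover have "(\<exists>i. par i \<and> b $ i \<noteq> 0) \<longleftrightarrow> b$od \<noteq> 0"
    by (metis index_cases even odd)
  ultimately show ?thesis unfolding Mtilde_def by simp
qed

lemma ratio_lift_nth: "ratio_lift par w $ e = 1 / of_real (sqrt (1 + (cmod w)\<^sup>2))"
  "ratio_lift par w $ od = w / of_real (sqrt (1 + (cmod w)\<^sup>2))"
  using even odd by (simp_all add: ratio_lift_def)

lemma ratio_lift_in_Mtilde:
  assumes "w \<noteq> 0"
  shows "ratio_lift par w \<in> Mtilde par"
proof -
  define n where "n = sqrt (1 + (cmod w)\<^sup>2)"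
  have n: "n > 0" "n\<^sup>2 = 1 + (cmod w)\<^sup>2"
    using sqrt_one_plus_power2_pos[of w] by (auto simp: n_def add_pos_nonneg)
  have "(cmod (1 / of_real n))\<^sup>2 + (cmod (w / of_real n))\<^sup>2 = (1 + (cmod w)\<^sup>2) / n\<^sup>2"
    using n(1) by (simp add: norm_divide power_divide add_divide_distrib)
  also have "\<dots> = 1" using n(1) by (simp add: n(2)[symmetric])
  finally show ?thesis
    using assms n(1) by (simp add: Mtilde_iff ratio_lift_nth n_def[symmetric])
qed

lemma squared_ratio_scale_ratio_lift: "c \<noteq> 0 \<Longrightarrow> squared_ratio e od (c *s ratio_lift par w) = w\<^sup>2"
  using sqrt_one_plus_power2_pos[of w] by (simp add: squared_ratio_def ratio_lift_nth)

lemma ratio_lift_uminus: "ratio_lift par (- w) = parity_flip par (ratio_lift par w)"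
  by (simp add: ratio_lift_def parity_flip_def vec_eq_iff)

lemma Mtilde_eq_scale_ratio_lift:
  assumes "b \<in> Mtilde par"
  obtains c where "cmod c = 1" "b = c *s ratio_lift par (b$od / b$e)"
proof -
  define w where "w = b$od / b$e"
  define c where "c = b$e * of_real (sqrt (1 + (cmod w)\<^sup>2))"
  have b: "(cmod (b$e))\<^sup>2 + (cmod (b$od))\<^sup>2 = 1" "b$e \<noteq> 0" "b$od = w * b$e"
    using assms by (auto simp: Mtilde_iff w_def)
  have "(cmod c)\<^sup>2 = (cmod (b$e))\<^sup>2 + (cmod (b$od))\<^sup>2"
    by (simp add: c_def b(3) norm_mult power_mult_distrib algebra_simps)
  hence "cmod c = 1" using b(1) by (metis norm_ge_zero one_power2 power2_eq_iff_nonneg zero_le_one)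
  moreover have "b $ i = (c *s ratio_lift par w) $ i" for i
    using index_cases[of i] b sqrt_one_plus_power2_pos[of w]
    by (elim disjE) (simp_all add: c_def ratio_lift_nth)
  hence "b = c *s ratio_lift par w" by (simp add: vec_eq_iff)
  ultimately show ?thesis unfolding w_def by (rule that)
qed

lemma squared_ratio_nonzero: "b \<in> Mtilde par \<Longrightarrow> squared_ratio e od b \<noteq> 0"
  by (simp add: squared_ratio_def Mtilde_iff)

lemma gauge_equiv_iff_squared_ratio:
  assumes x: "x \<in> Mtilde par" and y: "y \<in> Mtilde par"
  shows "gauge_equiv par x y \<longleftrightarrow> squared_ratio e od x = squared_ratio e od y"
proof
  assume "gauge_equiv par x y"
  then obtain c where "cmod c = 1" "y = c *s x \<or> y = c *s parity_flip par x"
    unfolding gauge_equiv_iff by blast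
  thus "squared_ratio e od x = squared_ratio e od y"
    using even odd by (auto simp: squared_ratio_def parity_flip_def power2_eq_square)
next
  define wx wy where "wx = x$od / x$e" and "wy = y$od / y$e"
  obtain c where c: "cmod c = 1" "x = c *s ratio_lift par wx"
    using Mtilde_eq_scale_ratio_lift[OF x] unfolding wx_def[symmetric] .
  obtain d where d: "cmod d = 1" "y = d *s ratio_lift par wy"
    using Mtilde_eq_scale_ratio_lift[OF y] unfolding wy_def[symmetric] .
  have "cnj c * c = 1" using c(1) by (metis complex_norm_square mult.commute of_real_1 power_one)
  hence inverse: "ratio_lift par wx = cnj c *s x"
    unfolding c(2) by (simp add: vector_smult_assoc)
  assume "squared_ratio e od x = squared_ratio e od y"
  hence "wy\<^sup>2 = wx\<^sup>2" by (simp add: squared_ratio_def wx_def wy_def)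
  hence "wy = wx \<or> wy = - wx" by (simp add: power2_eq_iff)
  hence "y = (d * cnj c) *s x \<or> y = (d * cnj c) *s parity_flip par x"
    unfolding d(2) by (auto simp: ratio_lift_uminus inverse parity_flip_scale vector_smult_assoc)
  moreover have "cmod (d * cnj c) = 1" using c d by (simp add: norm_mult)
  ultimately show "gauge_equiv par x y" unfolding gauge_equiv_iff by blast
qed

lemma squared_ratio_image: "squared_ratio e od ` Mtilde par = - {0}"
proof
  show "squared_ratio e od ` Mtilde par \<subseteq> - {0}" using squared_ratio_nonzero by auto
  show "- {0} \<subseteq> squared_ratio e od ` Mtilde par"
  proof
    fix z :: complex assume "z \<in> - {0}"
    hence "ratio_lift par (csqrt z) \<in> Mtilde par" by (intro ratio_lift_in_Mtilde) auto
    moreover have "squared_ratio e od (ratio_lift par (csqrt z)) = z"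
      using squared_ratio_scale_ratio_lift[of 1 "csqrt z"] by simp
    ultimately show "z \<in> squared_ratio e od ` Mtilde par" by force
  qed
qed

lemma continuous_on_squared_ratio: "continuous_on (Mtilde par) (squared_ratio e od)"
  unfolding squared_ratio_def by (intro continuous_intros) (auto simp: Mtilde_iff)

text \<open>Near \<open>z\<^sub>0 = w\<^sub>0\<^sup>2\<close>, the branch \<open>z \<mapsto> w\<^sub>0 \<surd>(z / z\<^sub>0)\<close> of the square root is continuous
  off the ray \<open>z / z\<^sub>0 \<in> \<real>\<^sub>\<le>\<^sub>0\<close> and takes the value \<open>w\<^sub>0\<close> at \<open>z\<^sub>0\<close>.\<close>

lemma local_sections_squared_ratio: "local_sections (Mtilde par) (squared_ratio e od) (- {0})"
  unfolding local_sections_def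
proof
  fix b assume b: "b \<in> Mtilde par"
  define w0 where "w0 = b$od / b$e"
  define z0 where "z0 = w0\<^sup>2"
  obtain c where c: "cmod c = 1" "b = c *s ratio_lift par w0"
    using Mtilde_eq_scale_ratio_lift[OF b] unfolding w0_def[symmetric] .
  have w0: "w0 \<noteq> 0" "z0 \<noteq> 0" using b by (auto simp: w0_def z0_def Mtilde_iff)
  define r where "r z = w0 * csqrt (z / z0)" for z
  define W where "W = - {0} \<inter> (\<lambda>z. z / z0) -` (- \<real>\<^sub>\<le>\<^sub>0)"
  define s where "s z = c *s ratio_lift par (r z)" for z
  have r: "r z \<noteq> 0" "(r z)\<^sup>2 = z" if "z \<in> W" for z
    using that w0 by (auto simp: r_def W_def power_mult_distrib z0_def)
  have "continuous_on W (\<lambda>z. csqrt (z / z0))"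
  proof (rule continuous_at_imp_continuous_on, intro ballI)
    fix z assume "z \<in> W"
    hence "z / z0 \<notin> \<real>\<^sub>\<le>\<^sub>0" by (simp add: W_def)
    thus "isCont (\<lambda>z. csqrt (z / z0)) z"
      by (intro continuous_intros isCont_o2[where f="\<lambda>z. z/z0" and g=csqrt] continuous_at_csqrt) auto
  qed
  hence "continuous_on W r" unfolding r_def by (intro continuous_intros)
  moreover have "complex_of_real (sqrt (1 + (cmod w)\<^sup>2)) \<noteq> 0" for w
    using sqrt_one_plus_power2_pos[of w] by simp
  ultimately have "continuous_on W (\<lambda>z. c * ((if par i then r z else 1) / of_real (sqrt (1 + (cmod (r z))\<^sup>2))))" for i
    by (cases "par i") (auto intro!: continuous_intros)
  hence "continuous_on W s"
    unfolding s_def ratio_lift_def vector_scalar_mult_def by (auto intro: continuous_on_vec_lambda)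
  moreover have "openin (top_of_set (- {0})) W" unfolding W_def
    by (intro openin_open_Int continuous_open_vimage) (use w0 in \<open>auto intro!: continuous_intros\<close>)
  moreover have "squared_ratio e od b = z0" by (simp add: squared_ratio_def w0_def z0_def)
  hence "squared_ratio e od b \<in> W" "s (squared_ratio e od b) = b"
    using w0 c(2) by (simp_all add: W_def s_def r_def)
  moreover have "s ` W \<subseteq> Mtilde par"
    using scale_in_Mtilde[OF c(1) ratio_lift_in_Mtilde[OF r(1)]] by (auto simp: s_def)
  moreover have "c \<noteq> 0" using c(1) by auto
  hence "\<forall>z\<in>W. squared_ratio e od (s z) = z"
    using r(2) squared_ratio_scale_ratio_lift by (simp add: s_def)
  ultimately show "\<exists>W s. openin (top_of_set (- {0})) W \<and> squared_ratio e od b \<in> W \<and>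
      continuous_on W s \<and> s ` W \<subseteq> Mtilde par \<and> (\<forall>y\<in>W. squared_ratio e od (s y) = y) \<and>
      s (squared_ratio e od b) = b"
    by blast
qed

lemma fundamental_group_Mspace_integer_group:
  assumes "x0 \<in> topspace (Mspace par)"
  shows "fundamental_group (Mspace par) x0 \<cong> integer_group"
  unfolding Mspace_def
proof (rule fundamental_group_quotient_iso[OF continuous_on_squared_ratio squared_ratio_image[symmetric]
      gauge_equiv_iff_squared_ratio local_sections_squared_ratio])
  show "x0 \<in> topspace (quotient_topology (top_of_set (Mtilde par)) (gauge_equiv par))"
    using assms by (simp add: Mspace_def)
  show "\<exists>\<kappa>. complete_loop_invariant (- {0}) y \<kappa> integer_group" if "y \<in> - {0}" for y :: complex
    using complete_loop_invariant_winding_int that by blast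
qed

end

section \<open>Several fermion flavours\<close>

lemma extend_partial_lift:
  fixes y z :: real
  assumes \<beta>: "continuous_on {0..y} \<beta>" "\<beta> ` {0..y} \<subseteq> M" "\<beta> 0 = b0" "\<forall>t\<in>{0..y}. h (\<beta> t) = \<gamma> t"
    and yz: "0 \<le> y" "y \<le> z" and \<gamma>: "continuous_on {y..z} \<gamma>" "\<gamma> ` {y..z} \<subseteq> W"
    and s: "continuous_on W s" "s ` W \<subseteq> M" "\<forall>P\<in>W. h (s P) = P" "s (h (\<beta> y)) = \<beta> y"
  shows "\<exists>\<beta>'. continuous_on {0..z} \<beta>' \<and> \<beta>' ` {0..z} \<subseteq> M \<and> \<beta>' 0 = b0 \<and> (\<forall>t\<in>{0..z}. h (\<beta>' t) = \<gamma> t)"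
proof -
  define \<beta>' where "\<beta>' t = (if t \<le> y then \<beta> t else s (\<gamma> t))" for t
  have "continuous_on {0..z} \<beta>'"
    unfolding \<beta>'_def
  proof (rule continuous_on_cases_le)
    have "{t \<in> {0..z}. t \<le> y} = {0..y}" using yz by auto
    thus "continuous_on {t \<in> {0..z}. t \<le> y} \<beta>" using \<beta>(1) by simp
    have "{t \<in> {0..z}. y \<le> t} = {y..z}" using yz by auto
    thus "continuous_on {t \<in> {0..z}. y \<le> t} (\<lambda>t. s (\<gamma> t))"
      using continuous_on_compose2[OF s(1) \<gamma>(1) \<gamma>(2)] by simp
    show "\<beta> t = s (\<gamma> t)" if "t \<in> {0..z}" "t = y" for t
      using that \<beta>(4) yz s(4) by auto
  qed (rule continuous_on_id)
  moreover have "\<beta>' ` {0..z} \<subseteq> M" "\<forall>t\<in>{0..z}. h (\<beta>' t) = \<gamma> t"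
    using \<beta>(2,4) s(2,3) \<gamma>(2) by (auto simp: \<beta>'_def image_subset_iff)
  moreover have "\<beta>' 0 = b0" using \<beta>(3) yz by (simp add: \<beta>'_def)
  ultimately show ?thesis by blast
qed

lemma path_lift_local_sections:
  assumes cover: "\<And>P. P \<in> T \<Longrightarrow> \<exists>k. P \<in> W k"
    and open_W: "\<And>k. openin (top_of_set T) (W k)"
    and sec: "\<And>b k. b \<in> M \<Longrightarrow> h b \<in> W k \<Longrightarrow>
                 \<exists>s. continuous_on (W k) s \<and> s ` W k \<subseteq> M \<and> (\<forall>P\<in>W k. h (s P) = P) \<and> s (h b) = b"
    and \<gamma>: "path \<gamma>" "path_image \<gamma> \<subseteq> T" and b0: "b0 \<in> M" "h b0 = pathstart \<gamma>"
  shows "\<exists>\<beta>. path \<beta> \<and> path_image \<beta> \<subseteq> M \<and> pathstart \<beta> = b0 \<and> (\<forall>t\<in>{0..1}. h (\<beta> t) = \<gamma> t)"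
proof -
  define Q where "Q t \<longleftrightarrow> (\<exists>\<beta>. continuous_on {0..t} \<beta> \<and> \<beta> ` {0..t} \<subseteq> M \<and> \<beta> 0 = b0 \<and>
                                (\<forall>s\<in>{0..t}. h (\<beta> s) = \<gamma> s))" for t
  have cont: "continuous_on {0..1} \<gamma>" using \<gamma> by (simp add: path_def)
  have in_T: "\<gamma> t \<in> T" if "t \<in> {0..1}" for t using \<gamma> that by (auto simp: path_image_def)
  have "Q 1"
  proof (rule connected_induction_simple[where S="{0..1::real}" and a=0 and b=1 and P=Q])
    show "Q 0" unfolding Q_def using b0 by (intro exI[where x="\<lambda>_. b0"]) (auto simp: pathstart_def)
    fix x :: real assume x: "x \<in> {0..1}"
    obtain k where k: "\<gamma> x \<in> W k" using cover in_T[OF x] by blast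
    have "openin (top_of_set {0..1}) ({0..1} \<inter> \<gamma> -` W k)"
      by (rule continuous_openin_preimage[OF cont _ open_W]) (use in_T in auto)
    then obtain \<delta> where \<delta>: "\<delta> > 0" "\<And>t. t \<in> {0..1} \<Longrightarrow> dist t x < \<delta> \<Longrightarrow> \<gamma> t \<in> W k"
      using x k unfolding openin_euclidean_subtopology_iff by blast
    show "\<exists>U. openin (top_of_set {0..1}) U \<and> x \<in> U \<and> (\<forall>y\<in>U. \<forall>z\<in>U. Q y \<longrightarrow> Q z)"
    proof (intro exI conjI ballI impI)
      show "openin (top_of_set {0..1}) ({0..1} \<inter> ball x \<delta>)" by (intro openin_open_Int) auto
      show "x \<in> {0..1} \<inter> ball x \<delta>" using x \<delta> by auto
      fix y z assume y: "y \<in> {0..1} \<inter> ball x \<delta>" and z: "z \<in> {0..1} \<inter> ball x \<delta>" and "Q y"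
      then obtain \<beta> where \<beta>: "continuous_on {0..y} \<beta>" "\<beta> ` {0..y} \<subseteq> M" "\<beta> 0 = b0"
          "\<forall>s\<in>{0..y}. h (\<beta> s) = \<gamma> s"
        unfolding Q_def by blast
      show "Q z"
      proof (cases "z \<le> y")
        case True
        thus ?thesis unfolding Q_def using \<beta> by (intro exI[where x=\<beta>]) (auto intro: continuous_on_subset)
      next
        case False
        have "y \<in> {0..y}" using y by auto
        hence "\<beta> y \<in> M" "h (\<beta> y) \<in> W k"
          using \<beta>(2,4) \<delta>(2)[of y] y by (auto simp: dist_commute)
        then obtain s where s: "continuous_on (W k) s" "s ` W k \<subseteq> M" "\<forall>P\<in>W k. h (s P) = P"
            "s (h (\<beta> y)) = \<beta> y"
          using sec by blast
        have "\<gamma> ` {y..z} \<subseteq> W k"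
          using \<delta>(2) y z by (auto simp: dist_real_def)
        moreover have "continuous_on {y..z} \<gamma>" using y z by (auto intro: continuous_on_subset[OF cont])
        ultimately show ?thesis
          unfolding Q_def using extend_partial_lift[OF \<beta> _ _ _ _ s] y False by auto
      qed
    qed
  qed auto
  then obtain \<beta> where "continuous_on {0..1} \<beta>" "\<beta> ` {0..1} \<subseteq> M" "\<beta> 0 = b0"
      "\<forall>s\<in>{0..1}. h (\<beta> s) = \<gamma> s"
    unfolding Q_def by blast
  thus ?thesis by (intro exI[where x=\<beta>]) (auto simp: path_def path_image_def pathstart_def)
qed

text \<open>\<open>b \<mapsto> b b\<^sup>*\<close> forgets the phase \<open>e\<^sup>i\<^sup>\<beta>\<close>; the sign \<open>\<eta>\<close> then acts by negating the
  entries of \<open>b b\<^sup>*\<close> that mix parities. The diagonal blocks together with all pairwise products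
  of mixed entries are invariant under this sign, and they separate the two signs because some
  mixed entry of \<open>b b\<^sup>*\<close> is nonzero.\<close>

definition projector :: "complex^('n::finite) \<Rightarrow> complex^('n \<times> 'n)" where
  "projector b = (\<chi> a. b$(fst a) * cnj (b$(snd a)))"

definition parity_twist :: "('n::finite \<Rightarrow> bool) \<Rightarrow> complex^('n \<times> 'n) \<Rightarrow> complex^('n \<times> 'n)" where
  "parity_twist par P = (\<chi> a. if par (fst a) = par (snd a) then P$a else - P$a)"

definition diagonal_blocks :: "('n::finite \<Rightarrow> bool) \<Rightarrow> complex^('n \<times> 'n) \<Rightarrow> complex^('n \<times> 'n)" where
  "diagonal_blocks par P = (\<chi> a. if par (fst a) = par (snd a) then P$a else 0)"

definition mixed_blocks :: "('n::finite \<Rightarrow> bool) \<Rightarrow> complex^('n \<times> 'n) \<Rightarrow> complex^('n \<times> 'n)" where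
  "mixed_blocks par P = (\<chi> a. if par (fst a) = par (snd a) then 0 else P$a)"

definition block_invariants ::
    "('n::finite \<Rightarrow> bool) \<Rightarrow> complex^('n \<times> 'n) \<Rightarrow> (complex^('n \<times> 'n)) \<times> (complex^(('n \<times> 'n) \<times> ('n \<times> 'n)))" where
  "block_invariants par P = (diagonal_blocks par P, (\<chi> ac. mixed_blocks par P $ fst ac * mixed_blocks par P $ snd ac))"

lemma projector_nth [simp]: "projector b $ (i, j) = b$i * cnj (b$j)"
  by (simp add: projector_def)

lemma projector_diagonal: "projector b $ (k, k) = of_real ((cmod (b$k))\<^sup>2)"
  using complex_norm_square[of "b$k"] by simp

lemma parity_twist_projector: "parity_twist par (projector b) = projector (parity_flip par b)"
  by (simp add: vec_eq_iff parity_twist_def projector_def parity_flip_def)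

lemma block_invariants_parity_twist [simp]: "block_invariants par (parity_twist par P) = block_invariants par P"
  by (simp add: block_invariants_def vec_eq_iff diagonal_blocks_def mixed_blocks_def parity_twist_def)

lemma mixed_blocks_parity_twist: "mixed_blocks par (parity_twist par P) = - mixed_blocks par P"
  by (simp add: vec_eq_iff mixed_blocks_def parity_twist_def)

lemma diagonal_plus_mixed_blocks: "P = diagonal_blocks par P + mixed_blocks par P"
  and parity_twist_eq_diagonal_minus_mixed: "parity_twist par P = diagonal_blocks par P - mixed_blocks par P"
  by (simp_all add: vec_eq_iff diagonal_blocks_def mixed_blocks_def parity_twist_def)

lemma mixed_blocks_projector_nonzero:
  assumes "b \<in> Mtilde par"
  obtains a where "mixed_blocks par (projector b) $ a \<noteq> 0"
proof -
  obtain i j where "\<not> par i" "b$i \<noteq> 0" "par j" "b$j \<noteq> 0" using assms by (auto simp: Mtilde_def)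
  hence "mixed_blocks par (projector b) $ (i, j) \<noteq> 0" by (simp add: mixed_blocks_def)
  thus ?thesis by (rule that)
qed

lemma Mtilde_nonzero: "b \<in> Mtilde par \<Longrightarrow> b \<noteq> 0"
  by (auto simp: Mtilde_def)

lemma projector_scale: "cmod c = 1 \<Longrightarrow> projector (c *s b) = projector b"
  using complex_norm_square[of c] by (simp add: vec_eq_iff projector_def algebra_simps)

lemma projector_eq_imp_scale:
  assumes "projector b = projector b'" "b \<noteq> 0"
  obtains c where "cmod c = 1" "b' = c *s b"
proof -
  obtain k where k: "b$k \<noteq> 0" using assms(2) by (metis vec_eq_iff zero_index)
  have "of_real ((cmod (b'$k))\<^sup>2) = (of_real ((cmod (b$k))\<^sup>2) :: complex)"
    using assms(1) projector_diagonal by metis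
  hence "(cmod (b'$k))\<^sup>2 = (cmod (b$k))\<^sup>2" by (simp only: of_real_eq_iff)
  hence norm_k: "cmod (b'$k) = cmod (b$k)" by (simp add: power2_eq_iff_nonneg)
  define c where "c = cnj (b$k) / cnj (b'$k)"
  have "b'$k \<noteq> 0" using k norm_k by auto
  moreover have "b'$i * cnj (b'$k) = b$i * cnj (b$k)" for i
    using assms(1) projector_nth by metis
  ultimately have "b' = c *s b" by (simp add: vec_eq_iff c_def field_simps)
  moreover have "cmod c = 1" using norm_k k by (simp add: c_def norm_divide)
  ultimately show ?thesis using that by blast
qed

lemma block_invariants_eq_imp:
  assumes b: "b \<in> Mtilde par" and eq: "block_invariants par Q = block_invariants par (projector b)"
  shows "Q = projector b \<or> Q = parity_twist par (projector b)"
proof -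
  let ?P = "projector b" and ?mQ = "mixed_blocks par Q" and ?mP = "mixed_blocks par (projector b)"
  obtain a0 where a0: "?mP $ a0 \<noteq> 0" using mixed_blocks_projector_nonzero[OF b] .
  have diagonal: "diagonal_blocks par Q = diagonal_blocks par ?P"
    and products: "\<And>a c. ?mQ $ a * ?mQ $ c = ?mP $ a * ?mP $ c"
    using eq by (auto simp: block_invariants_def vec_eq_iff)
  have "(?mQ $ a0)\<^sup>2 = (?mP $ a0)\<^sup>2" using products[of a0 a0] by (simp add: power2_eq_square)
  then obtain \<epsilon> where \<epsilon>: "\<epsilon> = 1 \<or> \<epsilon> = (-1::complex)" "?mQ $ a0 = \<epsilon> * ?mP $ a0"
    by (metis mult_1 mult_minus1 power2_eq_iff)
  have "?mQ $ a = \<epsilon> * ?mP $ a" for a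
  proof -
    have "(?mQ $ a * \<epsilon> - ?mP $ a) * ?mP $ a0 = 0"
      using products[of a a0] \<epsilon>(2) by (simp add: algebra_simps)
    hence "?mQ $ a * \<epsilon> = ?mP $ a" using a0 by simp
    hence "?mQ $ a * (\<epsilon> * \<epsilon>) = ?mP $ a * \<epsilon>" by (simp add: mult.assoc[symmetric])
    moreover have "\<epsilon> * \<epsilon> = 1" using \<epsilon>(1) by auto
    ultimately show ?thesis by (simp add: mult.commute)
  qed
  hence "?mQ = ?mP \<or> ?mQ = - ?mP" using \<epsilon>(1) by (auto simp: vec_eq_iff)
  thus ?thesis
    using diagonal diagonal_plus_mixed_blocks[of Q par] diagonal_plus_mixed_blocks[of ?P par]
      parity_twist_eq_diagonal_minus_mixed[of par ?P]
    by (metis diff_conv_add_uminus)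
qed

lemma gauge_equiv_iff_block_invariants:
  assumes b: "b \<in> Mtilde par" and b': "b' \<in> Mtilde par"
  shows "gauge_equiv par b b' \<longleftrightarrow> block_invariants par (projector b) = block_invariants par (projector b')"
proof
  assume "gauge_equiv par b b'"
  then obtain c where "cmod c = 1" "b' = c *s b \<or> b' = c *s parity_flip par b"
    unfolding gauge_equiv_iff by blast
  thus "block_invariants par (projector b) = block_invariants par (projector b')"
    by (auto simp: projector_scale parity_twist_projector[symmetric])
next
  assume "block_invariants par (projector b) = block_invariants par (projector b')"
  hence "projector b' = projector b \<or> projector b' = projector (parity_flip par b)"
    using block_invariants_eq_imp[OF b] parity_twist_projector by metis
  moreover have "b \<noteq> 0" "parity_flip par b \<noteq> 0"
    using Mtilde_nonzero b parity_flip_in_Mtilde by blast+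
  ultimately obtain c where "cmod c = 1" "b' = c *s b \<or> b' = c *s parity_flip par b"
    by (metis projector_eq_imp_scale)
  thus "gauge_equiv par b b'" unfolding gauge_equiv_iff by blast
qed

definition projector_chart :: "('n::finite \<Rightarrow> bool) \<Rightarrow> 'n \<Rightarrow> (complex^('n \<times> 'n)) set" where
  "projector_chart par k = {P \<in> projector ` Mtilde par. P $ (k, k) \<noteq> 0}"

text \<open>On the chart \<open>P\<^sub>k\<^sub>k \<noteq> 0\<close>, the \<open>k\<close>-th column of \<open>P = c c\<^sup>*\<close> divided by \<open>\<surd>P\<^sub>k\<^sub>k\<close> recovers \<open>c\<close>
  up to a phase; the phase is fixed so that the section passes through \<open>b\<close>.\<close>

definition chart_section :: "complex^('n::finite) \<Rightarrow> 'n \<Rightarrow> complex^('n \<times> 'n) \<Rightarrow> complex^'n" where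
  "chart_section b k P = (\<chi> i. (b$k / of_real (cmod (b$k))) * P $ (i, k) / of_real (sqrt (Re (P $ (k, k)))))"

lemma projector_in_chart_iff: "c \<in> Mtilde par \<Longrightarrow> projector c \<in> projector_chart par k \<longleftrightarrow> c$k \<noteq> 0"
  by (auto simp: projector_chart_def projector_diagonal)

lemma continuous_on_projector: "continuous_on S projector"
  unfolding projector_def by (intro continuous_intros continuous_on_vec_lambda)

lemma openin_projector_chart:
  fixes par :: "'n::finite \<Rightarrow> bool"
  shows "openin (top_of_set (projector ` Mtilde par)) (projector_chart par k)"
proof -
  have "open {P :: complex^('n \<times> 'n). P $ (k, k) \<noteq> 0}"
    by (intro open_Collect_neq continuous_intros)
  moreover have "projector_chart par k = projector ` Mtilde par \<inter> {P. P $ (k, k) \<noteq> 0}"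
    by (auto simp: projector_chart_def)
  ultimately show ?thesis by (simp add: openin_open_Int)
qed

lemma projector_charts_cover:
  assumes "P \<in> projector ` Mtilde par"
  obtains k where "P \<in> projector_chart par k"
proof -
  obtain c where c: "c \<in> Mtilde par" "P = projector c" using assms by auto
  then obtain k where "c$k \<noteq> 0" using Mtilde_nonzero by (metis vec_eq_iff zero_index)
  thus ?thesis using projector_in_chart_iff[OF c(1)] c(2) that by blast
qed

lemma chart_section_projector:
  fixes b c :: "complex^'n::finite"
  assumes "c$k \<noteq> 0"
  shows "chart_section b k (projector c) = ((b$k / of_real (cmod (b$k))) * (cnj (c$k) / of_real (cmod (c$k)))) *s c"
proof -
  have "sqrt (Re (projector c $ (k, k))) = cmod (c$k)" unfolding projector_diagonal by simp
  thus ?thesis by (simp add: chart_section_def vec_eq_iff field_simps)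
qed

lemma chart_section:
  fixes b :: "complex^'n::finite"
  assumes b: "b \<in> Mtilde par" "b$k \<noteq> 0"
  shows "continuous_on (projector_chart par k) (chart_section b k)"
    and "\<And>P. P \<in> projector_chart par k \<Longrightarrow> chart_section b k P \<in> Mtilde par \<and> projector (chart_section b k P) = P"
    and "chart_section b k (projector b) = b"
proof -
  have unit: "cmod ((b$k / of_real (cmod (b$k))) * (cnj (c$k) / of_real (cmod (c$k)))) = 1" if "c$k \<noteq> 0" for c
    using that b(2) by (simp add: norm_mult norm_divide)
  have "Re (P $ (k, k)) > 0" if "P \<in> projector_chart par k" for P
    using that by (auto simp: projector_chart_def projector_diagonal simp del: projector_nth)
  hence "complex_of_real (sqrt (Re (P $ (k, k)))) \<noteq> 0" if "P \<in> projector_chart par k" for P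
    using that by (metis less_irrefl of_real_eq_0_iff real_sqrt_eq_zero_cancel_iff)
  thus "continuous_on (projector_chart par k) (chart_section b k)"
    unfolding chart_section_def by (intro continuous_on_vec_lambda continuous_intros) auto
  show "chart_section b k P \<in> Mtilde par \<and> projector (chart_section b k P) = P"
    if P: "P \<in> projector_chart par k" for P
  proof -
    obtain c where c: "c \<in> Mtilde par" "P = projector c" using P by (auto simp: projector_chart_def)
    hence ck: "c$k \<noteq> 0" using P projector_in_chart_iff by blast
    define u where "u = (b$k / of_real (cmod (b$k))) * (cnj (c$k) / of_real (cmod (c$k)))"
    have "chart_section b k P = u *s c" unfolding c(2) u_def by (rule chart_section_projector[OF ck])
    moreover have "cmod u = 1" unfolding u_def by (rule unit[OF ck])
    ultimately show ?thesis using scale_in_Mtilde[OF _ c(1)] projector_scale c(2) by simp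
  qed
  have "(b$k / of_real (cmod (b$k))) * (cnj (b$k) / of_real (cmod (b$k))) = 1"
    using b(2) by (simp add: field_simps complex_norm_square[symmetric] power2_eq_square)
  thus "chart_section b k (projector b) = b" using chart_section_projector[OF b(2)] by simp
qed

lemma projector_path_lift:
  assumes \<gamma>: "path \<gamma>" "path_image \<gamma> \<subseteq> projector ` Mtilde par"
    and b0: "b0 \<in> Mtilde par" "projector b0 = pathstart \<gamma>"
  shows "\<exists>\<beta>. path \<beta> \<and> path_image \<beta> \<subseteq> Mtilde par \<and> pathstart \<beta> = b0 \<and> (\<forall>t\<in>{0..1}. projector (\<beta> t) = \<gamma> t)"
proof (rule path_lift_local_sections[where W="projector_chart par" and T="projector ` Mtilde par"
      and h=projector and M="Mtilde par", OF _ openin_projector_chart _ \<gamma> b0])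
  show "\<exists>k. P \<in> projector_chart par k" if "P \<in> projector ` Mtilde par" for P
    using projector_charts_cover[OF that] by blast
  fix b k assume "b \<in> Mtilde par" "projector b \<in> projector_chart par k"
  hence "b \<in> Mtilde par" "b$k \<noteq> 0" using projector_in_chart_iff by blast+
  note sec = chart_section[OF this]
  show "\<exists>s. continuous_on (projector_chart par k) s \<and> s ` projector_chart par k \<subseteq> Mtilde par \<and>
          (\<forall>P\<in>projector_chart par k. projector (s P) = P) \<and> s (projector b) = b"
    using sec by (intro exI[where x="chart_section b k"]) auto
qed

lemma local_sections_projector: "local_sections (Mtilde par) projector (projector ` Mtilde par)"
  unfolding local_sections_def
proof
  fix b assume b: "b \<in> Mtilde par"
  then obtain k where k: "b$k \<noteq> 0" using Mtilde_nonzero by (metis vec_eq_iff zero_index)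
  show "\<exists>W s. openin (top_of_set (projector ` Mtilde par)) W \<and> projector b \<in> W \<and> continuous_on W s \<and>
           s ` W \<subseteq> Mtilde par \<and> (\<forall>P\<in>W. projector (s P) = P) \<and> s (projector b) = b"
    using chart_section[OF b k] openin_projector_chart projector_in_chart_iff[OF b] k
    by (intro exI[where x="projector_chart par k"] exI[where x="chart_section b k"]) auto
qed

lemma obtain_two_elements:
  assumes "finite A" "2 \<le> card A"
  obtains a b where "a \<in> A" "b \<in> A" "a \<noteq> b"
proof -
  obtain a B where "A = insert a B" "a \<notin> B" "1 \<le> card B"
    using assms card_le_Suc_iff[of 1 A] by auto
  moreover from this obtain b where "b \<in> B" by (metis card.empty ex_in_conv not_one_le_zero)
  ultimately show ?thesis using that by blast
qed

definition coordinate_subspace :: "('n::finite \<Rightarrow> bool) \<Rightarrow> (complex^'n) set" where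
  "coordinate_subspace Q = {w. \<forall>i. \<not> Q i \<longrightarrow> w$i = 0}"

lemma subspace_coordinate_subspace: "subspace (coordinate_subspace Q)"
  by (auto simp: subspace_def coordinate_subspace_def)

text \<open>Two complex coordinates give real dimension at least \<open>4 \<ge> 3\<close>, so removing the origin
  keeps the subspace simply connected.\<close>

lemma simply_connected_punctured_coordinate_subspace:
  fixes Q :: "'n::finite \<Rightarrow> bool"
  assumes "2 \<le> card {i. Q i}"
  shows "simply_connected (coordinate_subspace Q - {0})"
proof -
  obtain k l where kl: "Q k" "Q l" "k \<noteq> l"
    using obtain_two_elements[OF _ assms] by auto
  let ?u1 = "axis k (1::complex)" and ?u2 = "axis k \<i>" and ?u3 = "axis l (1::complex)"
  have "?u2 \<notin> span {?u3}"
  proof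
    assume "?u2 \<in> span {?u3}"
    then obtain c where "?u2 = c *\<^sub>R ?u3" by (auto simp: span_singleton)
    hence "?u2 $ k = (c *\<^sub>R ?u3) $ k" by simp
    thus False using kl by (simp add: axis_def)
  qed
  moreover have "?u1 \<notin> span {?u2, ?u3}"
  proof
    assume "?u1 \<in> span {?u2, ?u3}"
    then obtain a where "?u1 - a *\<^sub>R ?u2 \<in> span {?u3}" by (auto simp: span_insert)
    then obtain c where "?u1 - a *\<^sub>R ?u2 = c *\<^sub>R ?u3" by (auto simp: span_singleton)
    hence "Re ((?u1 - a *\<^sub>R ?u2) $ k) = Re ((c *\<^sub>R ?u3) $ k)" by simp
    thus False using kl by (simp add: axis_def)
  qed
  moreover have "independent {?u3}" by (simp add: axis_eq_0_iff)
  ultimately have "independent {?u1, ?u2, ?u3}"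
    by (intro independent_insertI) (auto simp: independent_empty)
  moreover have "{?u1, ?u2, ?u3} \<subseteq> coordinate_subspace Q"
    using kl by (auto simp: coordinate_subspace_def axis_def)
  moreover have "card {?u1, ?u2, ?u3} = 3"
    using kl by (auto simp: axis_eq_axis)
  ultimately have "3 \<le> dim (coordinate_subspace Q)"
    by (metis independent_card_le_dim)
  hence "3 \<le> aff_dim (coordinate_subspace Q)"
    by (simp add: aff_dim_subspace[OF subspace_coordinate_subspace])
  thus ?thesis
    by (intro simply_connected_punctured_convex subspace_imp_convex[OF subspace_coordinate_subspace])
qed

definition restrict_coordinates :: "('n::finite \<Rightarrow> bool) \<Rightarrow> complex^'n \<Rightarrow> complex^'n" where
  "restrict_coordinates Q b = (\<chi> i. if Q i then b$i else 0)"

lemma continuous_on_restrict_coordinates: "continuous_on S (restrict_coordinates Q)"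
  unfolding restrict_coordinates_def
proof (intro continuous_on_vec_lambda)
  fix i show "continuous_on S (\<lambda>x. if Q i then x $ i else 0)"
    by (cases "Q i") (auto intro!: continuous_intros)
qed

definition both_parities_nonzero :: "('n::finite \<Rightarrow> bool) \<Rightarrow> (complex^'n) set" where
  "both_parities_nonzero par = {b. (\<exists>i. \<not> par i \<and> b$i \<noteq> 0) \<and> (\<exists>i. par i \<and> b$i \<noteq> 0)}"

lemma both_parities_nonzero_homeomorphic:
  "(coordinate_subspace (\<lambda>i. \<not> par i) - {0}) \<times> (coordinate_subspace par - {0}) homeomorphic
     both_parities_nonzero par"
  unfolding homeomorphic_def
proof (intro exI homeomorphismI)
  let ?E = "coordinate_subspace (\<lambda>i. \<not> par i) - {0}" and ?O = "coordinate_subspace par - {0}"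
  show "continuous_on (?E \<times> ?O) (\<lambda>x. fst x + snd x)" by (intro continuous_intros)
  show "continuous_on (both_parities_nonzero par)
          (\<lambda>b. (restrict_coordinates (\<lambda>i. \<not> par i) b, restrict_coordinates par b))"
    by (intro continuous_on_Pair continuous_on_restrict_coordinates)
  show "(\<lambda>x. fst x + snd x) ` (?E \<times> ?O) \<subseteq> both_parities_nonzero par"
    by (force simp: both_parities_nonzero_def coordinate_subspace_def vec_eq_iff)
  show "(\<lambda>b. (restrict_coordinates (\<lambda>i. \<not> par i) b, restrict_coordinates par b)) ` both_parities_nonzero par
          \<subseteq> ?E \<times> ?O"
    by (force simp: both_parities_nonzero_def coordinate_subspace_def restrict_coordinates_def vec_eq_iff)
  show "(restrict_coordinates (\<lambda>i. \<not> par i) (fst x + snd x), restrict_coordinates par (fst x + snd x)) = x"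
    if "x \<in> ?E \<times> ?O" for x
    using that by (auto simp: restrict_coordinates_def coordinate_subspace_def vec_eq_iff prod_eq_iff)
  show "fst (restrict_coordinates (\<lambda>i. \<not> par i) b, restrict_coordinates par b) +
          snd (restrict_coordinates (\<lambda>i. \<not> par i) b, restrict_coordinates par b) = b" for b
    by (simp add: restrict_coordinates_def vec_eq_iff)
qed

lemma simply_connected_Mtilde:
  fixes par :: "'n::finite \<Rightarrow> bool"
  assumes "2 \<le> card {i. \<not> par i}" "2 \<le> card {i. par i}"
  shows "simply_connected (Mtilde par)"
proof (rule retract_of_simply_connected)
  show "simply_connected (both_parities_nonzero par)"
    using simply_connected_Times simply_connected_punctured_coordinate_subspace[OF assms(1)]
      simply_connected_punctured_coordinate_subspace[OF assms(2)]
      both_parities_nonzero_homeomorphic homeomorphic_simply_connected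
    by blast
  have "(norm b)\<^sup>2 = 1 \<longleftrightarrow> norm b = 1" for b :: "complex^'n"
    by (metis norm_ge_zero one_power2 power2_eq_iff_nonneg zero_le_one)
  hence Mtilde: "Mtilde par = {b \<in> both_parities_nonzero par. norm b = 1}"
    by (auto simp: Mtilde_def both_parities_nonzero_def sum_cmod_power2_eq_norm_power2)
  have nonzero: "b \<noteq> 0" if "b \<in> both_parities_nonzero par" for b
    using that by (auto simp: both_parities_nonzero_def)
  have "retraction (both_parities_nonzero par) (Mtilde par) (\<lambda>b. (1 / norm b) *\<^sub>R b)"
    unfolding retraction_def
  proof (intro conjI ballI)
    show "Mtilde par \<subseteq> both_parities_nonzero par" using Mtilde by auto
    show "continuous_on (both_parities_nonzero par) (\<lambda>b. (1 / norm b) *\<^sub>R b)"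
      by (intro continuous_intros) (use nonzero in auto)
    show "(\<lambda>b. (1 / norm b) *\<^sub>R b) \<in> both_parities_nonzero par \<rightarrow> Mtilde par"
      using nonzero unfolding Mtilde by (auto simp: both_parities_nonzero_def)
    show "(1 / norm x) *\<^sub>R x = x" if "x \<in> Mtilde par" for x using that Mtilde by auto
  qed
  thus "Mtilde par retract_of both_parities_nonzero par" unfolding retract_of_def by blast
qed

text \<open>A loop in \<open>projector ` Mtilde\<close> lifts to a path in \<open>Mtilde\<close> from \<open>b\<^sub>0\<close> to a phase multiple
  \<open>e\<^sup>i\<^sup>\<theta> b\<^sub>0\<close>; closing it up by the arc \<open>e\<^sup>i\<^sup>\<theta>\<^sup>(\<^sup>1\<^sup>-\<^sup>t\<^sup>) b\<^sub>0\<close>, which projects to a constant loop, gives a loop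
  in the simply connected \<open>Mtilde\<close>.\<close>

lemma simply_connected_projector_image:
  assumes M: "simply_connected (Mtilde par)"
  shows "simply_connected (projector ` Mtilde par)"
  unfolding simply_connected_eq_contractible_path
proof (intro conjI allI impI)
  let ?M = "Mtilde par" and ?T = "projector ` Mtilde par"
  have cont: "continuous_on ?M projector" by (rule continuous_on_projector)
  show "path_connected ?T"
    by (rule path_connected_continuous_image[OF cont simply_connected_imp_path_connected[OF M]])
  fix \<gamma> assume \<gamma>: "path \<gamma> \<and> path_image \<gamma> \<subseteq> ?T \<and> pathfinish \<gamma> = pathstart \<gamma>"
  let ?x = "pathstart \<gamma>"
  obtain b0 where b0: "b0 \<in> ?M" "projector b0 = ?x"
    using \<gamma> pathstart_in_path_image by (metis image_iff subsetD)
  obtain \<beta> where \<beta>: "path \<beta>" "path_image \<beta> \<subseteq> ?M" "pathstart \<beta> = b0" "\<forall>t\<in>{0..1}. projector (\<beta> t) = \<gamma> t"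
    using projector_path_lift[of \<gamma> par b0] \<gamma> b0 by blast
  have "projector (pathfinish \<beta>) = projector b0" using \<beta>(4) \<gamma> b0 by (simp add: pathfinish_def pathstart_def)
  then obtain c where c: "cmod c = 1" "pathfinish \<beta> = c *s b0"
    using projector_eq_imp_scale Mtilde_nonzero[OF b0(1)] by metis
  define \<delta> where "\<delta> t = exp (\<i> * of_real (Arg c * (1 - t))) *s b0" for t
  have unit: "cmod (exp (\<i> * of_real (Arg c * (1 - t)))) = 1" for t by (rule norm_exp_i_times)
  have "c \<noteq> 0" using c(1) by auto
  hence "exp (\<i> * of_real (Arg c)) = c" using Arg_eq[of c] c(1) by simp
  hence \<delta>: "path \<delta>" "path_image \<delta> \<subseteq> ?M" "pathstart \<delta> = pathfinish \<beta>" "pathfinish \<delta> = b0"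
    using scale_in_Mtilde[OF unit b0(1)] c(2)
    unfolding path_image_def pathstart_def pathfinish_def \<delta>_def path_def vector_scalar_mult_def
    by (auto intro!: continuous_intros continuous_on_vec_lambda)
  have "path (\<beta> +++ \<delta>)" "path_image (\<beta> +++ \<delta>) \<subseteq> ?M" "pathfinish (\<beta> +++ \<delta>) = pathstart (\<beta> +++ \<delta>)"
    using \<beta> \<delta> by (auto simp: path_image_join)
  hence "homotopic_paths ?M (\<beta> +++ \<delta>) (linepath b0 b0)"
    using M \<beta>(3) unfolding simply_connected_eq_contractible_path by auto
  hence "homotopic_paths ?T (projector \<circ> (\<beta> +++ \<delta>)) (projector \<circ> linepath b0 b0)"
    by (rule homotopic_paths_continuous_image[OF _ cont]) auto
  moreover have "projector (\<delta> t) = projector b0" for t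
    unfolding \<delta>_def by (rule projector_scale[OF unit])
  hence "projector \<circ> \<delta> = linepath ?x ?x" using b0 by (simp add: fun_eq_iff)
  hence "projector \<circ> (\<beta> +++ \<delta>) = (projector \<circ> \<beta>) +++ linepath ?x ?x"
    by (simp add: path_compose_join)
  moreover have "projector \<circ> linepath b0 b0 = linepath ?x ?x" using b0 by (auto simp: fun_eq_iff)
  ultimately have contract: "homotopic_paths ?T ((projector \<circ> \<beta>) +++ linepath ?x ?x) (linepath ?x ?x)"
    by simp
  have "path (projector \<circ> \<beta>)" "path_image (projector \<circ> \<beta>) \<subseteq> ?T"
    using \<beta>(1,2) continuous_on_subset[OF cont \<beta>(2)]
    by (auto intro: path_continuous_image simp: path_image_compose)
  moreover have "pathfinish (projector \<circ> \<beta>) = ?x" using \<beta>(4) \<gamma> by (simp add: pathfinish_def pathstart_def)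
  ultimately have rid: "homotopic_paths ?T ((projector \<circ> \<beta>) +++ linepath ?x ?x) (projector \<circ> \<beta>)"
    using homotopic_paths_rid by metis
  have "homotopic_paths ?T \<gamma> (projector \<circ> \<beta>)"
    using \<gamma> \<beta>(4) by (intro homotopic_paths_eq) auto
  thus "homotopic_paths ?T \<gamma> (linepath ?x ?x)"
    using homotopic_paths_trans[OF homotopic_paths_sym[OF rid] contract] homotopic_paths_trans by blast
qed

subsection \<open>The sign of the mixed blocks as a two-sheeted covering\<close>

lemma power2_in_nonpos_Reals_iff: "(w::complex)\<^sup>2 \<in> \<real>\<^sub>\<le>\<^sub>0 \<longleftrightarrow> Re w = 0"
proof -
  have Re: "Re (w\<^sup>2) = (Re w)\<^sup>2 - (Im w)\<^sup>2" and Im: "Im (w\<^sup>2) = 2 * Re w * Im w"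
    by (simp_all add: power2_eq_square)
  show ?thesis
  proof
    assume "w\<^sup>2 \<in> \<real>\<^sub>\<le>\<^sub>0"
    hence nonpos: "Re (w\<^sup>2) \<le> 0" "Im (w\<^sup>2) = 0" by (auto simp: complex_nonpos_Reals_iff)
    show "Re w = 0"
    proof (rule ccontr)
      assume "Re w \<noteq> 0"
      hence "Im w = 0" "(Re w)\<^sup>2 > 0" using nonpos(2) Im by simp_all
      thus False using nonpos(1) Re by simp
    qed
  qed (simp add: Re Im complex_nonpos_Reals_iff)
qed

lemma continuous_on_block_invariants:
  fixes par :: "'n::finite \<Rightarrow> bool"
  shows "continuous_on S (block_invariants par)"
proof -
  have "continuous_on S (diagonal_blocks par)"
    unfolding diagonal_blocks_def
  proof (intro continuous_on_vec_lambda)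
    fix a show "continuous_on S (\<lambda>P. if par (fst a) = par (snd a) then P $ a else 0)"
      by (cases "par (fst a) = par (snd a)") (auto intro!: continuous_intros)
  qed
  moreover have "continuous_on S (mixed_blocks par)"
    unfolding mixed_blocks_def
  proof (intro continuous_on_vec_lambda)
    fix a show "continuous_on S (\<lambda>P. if par (fst a) = par (snd a) then 0 else P $ a)"
      by (cases "par (fst a) = par (snd a)") (auto intro!: continuous_intros)
  qed
  ultimately
  show ?thesis unfolding block_invariants_def
    by (intro continuous_on_Pair continuous_on_vec_lambda continuous_intros)
qed

lemma continuous_on_parity_twist: "continuous_on S (parity_twist par)"
  unfolding parity_twist_def
proof (intro continuous_on_vec_lambda)
  fix a show "continuous_on S (\<lambda>P. if par (fst a) = par (snd a) then P $ a else - P $ a)"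
    by (cases "par (fst a) = par (snd a)") (auto intro!: continuous_intros)
qed

lemma parity_twist_projector_in_image:
  assumes "P \<in> projector ` Mtilde par"
  shows "parity_twist par P \<in> projector ` Mtilde par"
proof -
  obtain b where "b \<in> Mtilde par" "P = projector b" using assms by auto
  thus ?thesis by (metis imageI parity_flip_in_Mtilde parity_twist_projector)
qed

lemma fibre_involution_parity_twist:
  "fibre_involution (projector ` Mtilde par) (block_invariants par) (parity_twist par)"
  unfolding fibre_involution_def
proof (intro conjI ballI impI)
  show "continuous_on (projector ` Mtilde par) (parity_twist par)" by (rule continuous_on_parity_twist)
  show "parity_twist par ` projector ` Mtilde par \<subseteq> projector ` Mtilde par"
    using parity_twist_projector_in_image by blast
  fix P assume "P \<in> projector ` Mtilde par"
  then obtain b where b: "b \<in> Mtilde par" "P = projector b" by auto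
  show "block_invariants par (parity_twist par P) = block_invariants par P" by simp
  show "parity_twist par P \<noteq> P"
  proof
    obtain a where a: "mixed_blocks par P $ a \<noteq> 0"
      using mixed_blocks_projector_nonzero[OF b(1)] b(2) by blast
    have "- z \<noteq> z" if "z \<noteq> 0" for z :: complex using that by (simp add: complex_eq_iff)
    hence "mixed_blocks par (parity_twist par P) $ a \<noteq> mixed_blocks par P $ a"
      using a by (simp add: mixed_blocks_parity_twist)
    moreover assume "parity_twist par P = P"
    ultimately show False by simp
  qed
  fix Q assume "block_invariants par Q = block_invariants par P"
  thus "Q = P \<or> Q = parity_twist par P" using block_invariants_eq_imp[OF b(1), of Q] b(2) by simp
qed

context
  fixes par :: "'n::finite \<Rightarrow> bool" and a0 :: "'n \<times> 'n" and z0 :: complex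
  assumes mixed_a0: "par (fst a0) \<noteq> par (snd a0)" and z0: "z0 \<noteq> 0"
begin

text \<open>On the half space \<open>Re (Q\<^sub>a\<^sub>0 / z\<^sub>0) > 0\<close> for a mixed entry \<open>a\<^sub>0\<close>, the invariants determine
  \<open>Q\<^sub>a\<^sub>0\<^sup>2\<close> and hence, by a continuous square root, \<open>Q\<^sub>a\<^sub>0\<close>; the products \<open>Q\<^sub>a Q\<^sub>a\<^sub>0\<close> then give
  the whole mixed block.\<close>

definition half_sheet :: "(complex^('n \<times> 'n)) set" where
  "half_sheet = {Q \<in> projector ` Mtilde par. Re (Q $ a0 / z0) > 0}"

definition sheet_square :: "(complex^('n \<times> 'n)) \<times> (complex^(('n \<times> 'n) \<times> ('n \<times> 'n))) \<Rightarrow> complex" where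
  "sheet_square y = snd y $ (a0, a0) / z0\<^sup>2"

definition sheet_inverse ::
    "(complex^('n \<times> 'n)) \<times> (complex^(('n \<times> 'n) \<times> ('n \<times> 'n))) \<Rightarrow> complex^('n \<times> 'n)" where
  "sheet_inverse y = fst y + (\<chi> a. snd y $ (a, a0) / (z0 * csqrt (sheet_square y)))"

lemma snd_block_invariants_a0: "snd (block_invariants par Q) $ (a, a0) = mixed_blocks par Q $ a * Q $ a0"
  using mixed_a0 by (simp add: block_invariants_def mixed_blocks_def)

lemma sheet_square_block_invariants: "sheet_square (block_invariants par Q) = (Q $ a0 / z0)\<^sup>2"
  using snd_block_invariants_a0[of Q a0] mixed_a0
  by (simp add: sheet_square_def mixed_blocks_def power_divide power2_eq_square)

lemma parity_twist_a0: "parity_twist par Q $ a0 = - Q $ a0"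
  using mixed_a0 by (simp add: parity_twist_def)

lemma sheet_inverse_block_invariants:
  assumes "Q \<in> half_sheet"
  shows "sheet_inverse (block_invariants par Q) = Q"
proof -
  have "Re (Q $ a0 / z0) > 0" using assms by (simp add: half_sheet_def)
  hence "z0 * csqrt (sheet_square (block_invariants par Q)) = Q $ a0" "Q $ a0 \<noteq> 0"
    using z0 by (auto simp: sheet_square_block_invariants csqrt_square)
  thus ?thesis
    by (simp add: sheet_inverse_def snd_block_invariants_a0 vec_eq_iff)
      (simp add: block_invariants_def diagonal_blocks_def mixed_blocks_def)
qed

lemma block_invariants_half_sheet:
  "block_invariants par ` half_sheet =
     {y \<in> block_invariants par ` projector ` Mtilde par. sheet_square y \<notin> \<real>\<^sub>\<le>\<^sub>0}"
proof
  show "block_invariants par ` half_sheet \<subseteq> {y \<in> block_invariants par ` projector ` Mtilde par. sheet_square y \<notin> \<real>\<^sub>\<le>\<^sub>0}"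
    using power2_in_nonpos_Reals_iff by (auto simp: half_sheet_def sheet_square_block_invariants)
  show "{y \<in> block_invariants par ` projector ` Mtilde par. sheet_square y \<notin> \<real>\<^sub>\<le>\<^sub>0} \<subseteq> block_invariants par ` half_sheet"
  proof
    fix y assume "y \<in> {y \<in> block_invariants par ` projector ` Mtilde par. sheet_square y \<notin> \<real>\<^sub>\<le>\<^sub>0}"
    then obtain Q where Q: "Q \<in> projector ` Mtilde par" "y = block_invariants par Q"
        "sheet_square y \<notin> \<real>\<^sub>\<le>\<^sub>0"
      by auto
    hence Re: "Re (Q $ a0 / z0) \<noteq> 0"
      using power2_in_nonpos_Reals_iff by (simp add: sheet_square_block_invariants)
    show "y \<in> block_invariants par ` half_sheet"
    proof (cases "Re (Q $ a0 / z0) > 0")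
      case True thus ?thesis using Q by (auto simp: half_sheet_def)
    next
      case False
      moreover have "parity_twist par Q \<in> projector ` Mtilde par"
        using parity_twist_projector_in_image[OF Q(1)] .
      ultimately have "parity_twist par Q \<in> half_sheet" using Re parity_twist_a0 by (auto simp: half_sheet_def)
      moreover have "y = block_invariants par (parity_twist par Q)" using Q(2) by simp
      ultimately show ?thesis by blast
    qed
  qed
qed

lemma homeomorphism_half_sheet:
  "homeomorphism half_sheet (block_invariants par ` half_sheet) (block_invariants par) sheet_inverse"
proof -
  have "continuous_on (block_invariants par ` half_sheet) (\<lambda>y. csqrt (sheet_square y))"
  proof (rule continuous_at_imp_continuous_on, intro ballI)
    fix y assume "y \<in> block_invariants par ` half_sheet"
    hence "sheet_square y \<notin> \<real>\<^sub>\<le>\<^sub>0" using block_invariants_half_sheet by blast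
    thus "isCont (\<lambda>y. csqrt (sheet_square y)) y" unfolding sheet_square_def
      by (intro isCont_o2[where f="\<lambda>y. snd y $ (a0, a0) / z0\<^sup>2" and g=csqrt] continuous_at_csqrt
          continuous_intros) (auto simp: sheet_square_def)
  qed
  moreover have "z0 * csqrt (sheet_square y) \<noteq> 0" if "y \<in> block_invariants par ` half_sheet" for y
    using that z0 block_invariants_half_sheet by auto
  ultimately have "continuous_on (block_invariants par ` half_sheet) sheet_inverse"
    unfolding sheet_inverse_def by (intro continuous_intros continuous_on_vec_lambda) auto
  thus ?thesis
    using sheet_inverse_block_invariants continuous_on_block_invariants by (intro homeomorphismI) auto
qed

lemma openin_block_invariants_half_sheet:
  "openin (top_of_set (block_invariants par ` projector ` Mtilde par)) (block_invariants par ` half_sheet)"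
proof -
  have "open (sheet_square -` (- \<real>\<^sub>\<le>\<^sub>0))"
    unfolding sheet_square_def by (intro continuous_open_vimage) (use z0 in \<open>auto intro!: continuous_intros\<close>)
  moreover have "block_invariants par ` half_sheet =
      block_invariants par ` projector ` Mtilde par \<inter> sheet_square -` (- \<real>\<^sub>\<le>\<^sub>0)"
    using block_invariants_half_sheet by auto
  ultimately show ?thesis by (simp add: openin_open_Int)
qed

end

lemma block_invariants_local_sheet:
  fixes par :: "'n::finite \<Rightarrow> bool"
  assumes x: "x \<in> projector ` Mtilde par"
  obtains U q where "x \<in> U" "openin (top_of_set (projector ` Mtilde par)) U"
    "U \<inter> parity_twist par ` U = {}"
    "openin (top_of_set (block_invariants par ` projector ` Mtilde par)) (block_invariants par ` U)"
    "homeomorphism U (block_invariants par ` U) (block_invariants par) q"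
proof -
  obtain b0 where b0: "b0 \<in> Mtilde par" "x = projector b0" using x by auto
  obtain a0 where a0: "mixed_blocks par x $ a0 \<noteq> 0"
    using mixed_blocks_projector_nonzero[OF b0(1)] b0(2) by blast
  have mixed_a0: "par (fst a0) \<noteq> par (snd a0)" using a0 by (auto simp: mixed_blocks_def split: if_splits)
  define z0 where "z0 = x $ a0"
  have z0: "z0 \<noteq> 0" using a0 mixed_a0 by (simp add: mixed_blocks_def z0_def)
  let ?U = "half_sheet par a0 z0"
  show ?thesis
  proof
    note U_def = half_sheet_def[OF mixed_a0 z0]
    show "x \<in> ?U" unfolding U_def using x z0 by (simp add: z0_def)
    have "open {Q :: complex^('n \<times> 'n). Re (Q $ a0 / z0) > 0}"
      using z0 by (auto intro!: open_Collect_less continuous_intros)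
    thus "openin (top_of_set (projector ` Mtilde par)) ?U"
      unfolding U_def by (simp add: Collect_conj_eq Int_commute openin_open_Int)
    have "parity_twist par Q \<notin> ?U" if "Q \<in> ?U" for Q
      using that parity_twist_a0[OF mixed_a0 z0, of Q] by (simp add: U_def)
    thus "?U \<inter> parity_twist par ` ?U = {}" by blast
    show "openin (top_of_set (block_invariants par ` projector ` Mtilde par)) (block_invariants par ` ?U)"
      by (rule openin_block_invariants_half_sheet[OF mixed_a0 z0])
    show "homeomorphism ?U (block_invariants par ` ?U) (block_invariants par) (sheet_inverse a0 z0)"
      by (rule homeomorphism_half_sheet[OF mixed_a0 z0])
  qed
qed

lemma covering_space_block_invariants:
  "covering_space (projector ` Mtilde par) (block_invariants par) (block_invariants par ` projector ` Mtilde par)"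
proof (rule covering_space_fibre_involution[OF continuous_on_block_invariants fibre_involution_parity_twist])
  fix x assume "x \<in> projector ` Mtilde par"
  then obtain U q where "x \<in> U" "openin (top_of_set (projector ` Mtilde par)) U"
    "U \<inter> parity_twist par ` U = {}"
    "openin (top_of_set (block_invariants par ` projector ` Mtilde par)) (block_invariants par ` U)"
    "homeomorphism U (block_invariants par ` U) (block_invariants par) q"
    by (rule block_invariants_local_sheet)
  thus "\<exists>U q. x \<in> U \<and> openin (top_of_set (projector ` Mtilde par)) U \<and> U \<inter> parity_twist par ` U = {} \<and>
      openin (top_of_set (block_invariants par ` projector ` Mtilde par)) (block_invariants par ` U) \<and>
      homeomorphism U (block_invariants par ` U) (block_invariants par) q"
    by blast
qed

lemma local_sections_comp_covering:
  assumes h: "local_sections M h T" and cov: "covering_space T p S" and hM: "h ` M \<subseteq> T"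
  shows "local_sections M (p \<circ> h) S"
  unfolding local_sections_def
proof
  fix b assume b: "b \<in> M"
  obtain W1 s1 where W1: "openin (top_of_set T) W1" "h b \<in> W1" "continuous_on W1 s1" "s1 ` W1 \<subseteq> M"
      "\<forall>P\<in>W1. h (s1 P) = P" "s1 (h b) = b"
    using h b unfolding local_sections_def by blast
  have "p (h b) \<in> S" using cov hM b by (auto simp: covering_space_def)
  then obtain Wc v where Wc: "p (h b) \<in> Wc" "openin (top_of_set S) Wc" "\<Union>v = T \<inter> p -` Wc"
      "\<forall>u\<in>v. \<exists>q. homeomorphism u Wc p q"
    using cov unfolding covering_space_def by metis
  moreover have "h b \<in> T" using hM b by auto
  ultimately obtain u where u: "u \<in> v" "h b \<in> u" by auto
  then obtain q where q: "homeomorphism u Wc p q" using Wc(4) by blast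
  have uT: "u \<subseteq> T" using Wc(3) u(1) by blast
  have q_props: "q ` Wc = u" "continuous_on Wc q" "\<And>y. y \<in> Wc \<Longrightarrow> p (q y) = y" "\<And>z. z \<in> u \<Longrightarrow> q (p z) = z"
    using q unfolding homeomorphism_def by auto
  define W where "W = Wc \<inter> q -` W1"
  have "openin (top_of_set Wc) W" unfolding W_def
    by (rule continuous_openin_preimage[OF q_props(2) _ W1(1)]) (use q_props(1) uT in auto)
  hence "openin (top_of_set S) W" using Wc(2) openin_trans by blast
  moreover have "(p \<circ> h) b \<in> W" "(s1 \<circ> q) ((p \<circ> h) b) = b"
    using Wc(1) q_props(4)[OF u(2)] W1(2,6) by (simp_all add: W_def)
  moreover have "continuous_on W (s1 \<circ> q)"
    by (rule continuous_on_compose[OF continuous_on_subset[OF q_props(2)] continuous_on_subset[OF W1(3)]])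
      (auto simp: W_def)
  moreover have "(s1 \<circ> q) ` W \<subseteq> M" "\<forall>y\<in>W. (p \<circ> h) ((s1 \<circ> q) y) = y"
    using W1(4,5) q_props(3) by (auto simp: W_def)
  ultimately show "\<exists>W s. openin (top_of_set S) W \<and> (p \<circ> h) b \<in> W \<and> continuous_on W s \<and> s ` W \<subseteq> M \<and>
      (\<forall>y\<in>W. (p \<circ> h) (s y) = y) \<and> s ((p \<circ> h) b) = b"
    by blast
qed

lemma fundamental_group_Mspace_integer_mod_group_2:
  fixes par :: "'n::finite \<Rightarrow> bool"
  assumes "2 \<le> card {i. \<not> par i}" "2 \<le> card {i. par i}" and x0: "x0 \<in> topspace (Mspace par)"
  shows "fundamental_group (Mspace par) x0 \<cong> integer_mod_group 2"
  unfolding Mspace_def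
proof (rule fundamental_group_quotient_iso)
  let ?M = "Mtilde par" and ?S = "block_invariants par ` projector ` Mtilde par"
  show "continuous_on ?M (block_invariants par \<circ> projector)"
    by (intro continuous_on_compose continuous_on_projector continuous_on_block_invariants)
  show "?S = (block_invariants par \<circ> projector) ` ?M" by (simp add: image_comp)
  show "gauge_equiv par b b' \<longleftrightarrow> (block_invariants par \<circ> projector) b = (block_invariants par \<circ> projector) b'"
    if "b \<in> ?M" "b' \<in> ?M" for b b'
    using gauge_equiv_iff_block_invariants[OF that] by simp
  show "local_sections ?M (block_invariants par \<circ> projector) ?S"
    by (rule local_sections_comp_covering[OF local_sections_projector covering_space_block_invariants]) simp
  show "x0 \<in> topspace (quotient_topology (top_of_set ?M) (gauge_equiv par))"
    using x0 by (simp add: Mspace_def)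
  show "\<exists>\<kappa>. complete_loop_invariant ?S y \<kappa> (integer_mod_group 2)" if y: "y \<in> ?S" for y
  proof -
    obtain P where P: "P \<in> projector ` Mtilde par" "y = block_invariants par P" using y by blast
    show ?thesis unfolding P(2)
      by (rule exI, rule complete_loop_invariant_lift_sheet[OF covering_space_block_invariants
          simply_connected_projector_image[OF simply_connected_Mtilde[OF assms(1,2)]]
          fibre_involution_parity_twist P(1)])
  qed
qed

theorem mainTheorem10:
  fixes NF :: nat and par :: "'n::finite \<Rightarrow> bool" and x0 :: "(complex^'n) set"
  assumes "NF \<ge> 1"
    and "CARD('n) = 2 ^ NF"
    and "card {i. par i} = card {i. \<not> par i}"
    and "x0 \<in> topspace (Mspace par)"
  shows "(NF = 1 \<longrightarrow> fundamental_group (Mspace par) x0 \<cong> integer_group) \<and>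
         (NF \<ge> 2 \<longrightarrow> fundamental_group (Mspace par) x0 \<cong> integer_mod_group 2)"
proof -
  have parts: "(UNIV :: 'n set) = {i. par i} \<union> {i. \<not> par i}" by auto
  have "card (UNIV :: 'n set) = card {i. par i} + card {i. \<not> par i}"
    by (subst parts, rule card_Un_disjoint) auto
  moreover obtain m where m: "NF = Suc m" using assms(1) by (cases NF) auto
  ultimately have cards: "card {i. par i} = 2 ^ m" "card {i. \<not> par i} = 2 ^ m"
    using assms(2,3) by simp_all
  show ?thesis
  proof (intro conjI impI)
    assume "NF = 1"
    hence "card {i. par i} = 1" "card {i. \<not> par i} = 1" using cards m by simp_all
    then obtain od e where "{i. par i} = {od}" "{i. \<not> par i} = {e}"
      by (metis card_1_singletonE)
    hence "two_indices par e od" by unfold_locales auto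
    thus "fundamental_group (Mspace par) x0 \<cong> integer_group"
      using two_indices.fundamental_group_Mspace_integer_group assms(4) by blast
  next
    assume "NF \<ge> 2"
    hence "(2::nat) ^ 1 \<le> 2 ^ m" using m by (intro power_increasing) auto
    hence "2 \<le> card {i. \<not> par i}" "2 \<le> card {i. par i}" using cards by simp_all
    thus "fundamental_group (Mspace par) x0 \<cong> integer_mod_group 2"
      using fundamental_group_Mspace_integer_mod_group_2 assms(4) by blast
  qed
qed

end
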